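(* Let $D,W,V,K$ be positive integers, $N:=W+VK$, and let $\mathcal{D}\in\mathbb{R}^{W\times VK}$ with $\mathrm{rank}(\mathcal{D})=D$ and $\mathrm{rank}(\mathcal{D}_{1:D,1:D})=D$. Fix $\sharp\in\{\mathrm{st},\mathrm{m}\}$ and index pairs $\theta^{(\sharp)}(1),\dots,\theta^{(\sharp)}(J)$, lying in $\{1,\dots,W\}^{\times2}$ if $\sharp=\mathrm{st}$ and in $\{1,\dots,VK\}^{\times2}$ if $\sharp=\mathrm{m}$, together with known values $c_1,\dots,c_J\in\mathbb{R}$. A matrix $G\in\mathbb{R}^{N\times N}$ is called compatible with the a priori knowledge if $G=P^TP$ for some $P=(P_{\mathrm{st}}\,|\,P_{\mathrm{m}})$ with $P_{\mathrm{st}}\in\mathbb{R}^{D\times W}$, $P_{\mathrm{m}}\in\mathbb{R}^{D\times VK}$, such that $P_{\mathrm{st}}^TP_{\mathrm{m}}=\mathcal{D}$ and $(G_\sharp)_{\theta^{(\sharp)}(j)}=c_j$ for $j=1,\dots,J$, where $G_{\mathrm{st}}=P_{\mathrm{st}}^TP_{\mathrm{st}}$ and $G_{\mathrm{m}}=P_{\mathrm{m}}^TP_{\mathrm{m}}$; assume that at least one compatible $G$ exists. Define $\mathcal{M}:=\bigl(\mathrm{vec}(\mathcal{N}^{(\sharp)}_1)\,|\cdots|\,\mathrm{vec}(\mathcal{N}^{(\sharp)}_J)\bigr)$, where $$\mathcal{N}^{(\mathrm{st})}_j:=\tfrac12\Bigl(\bigl(\mathcal{D}_{\theta^{(\mathrm{st})}(j)_1,1:D}\bigr)^T\mathcal{D}_{\theta^{(\mathrm{st})}(j)_2,1:D}+\bigl(\mathcal{D}_{\theta^{(\mathrm{st})}(j)_2,1:D}\bigr)^T\mathcal{D}_{\theta^{(\mathrm{st})}(j)_1,1:D}\Bigr),$$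 $$\mathcal{N}^{(\mathrm{m})}_j:=\tfrac12\Bigl(\mathcal{D}_{1:D,\theta^{(\mathrm{m})}(j)_1}\bigl(\mathcal{D}_{1:D,\theta^{(\mathrm{m})}(j)_2}\bigr)^T+\mathcal{D}_{1:D,\theta^{(\mathrm{m})}(j)_2}\bigl(\mathcal{D}_{1:D,\theta^{(\mathrm{m})}(j)_1}\bigr)^T\Bigr).$$ Then the following are equivalent: (i) there exists only one matrix $G$ with $\mathrm{rank}(G)=D$ which is compatible with the a priori knowledge; (ii) $\mathrm{rank}(\mathcal{M})=D(D+1)/2$.
   Context: $\mathcal{D}_{1:D,1:D}$ is the top-left $D\times D$ submatrix of $\mathcal{D}$; $\mathcal{D}_{i,1:D}$ is the row vector formed by the first $D$ entries of row $i$ of $\mathcal{D}$; $\mathcal{D}_{1:D,l}$ is the column vector formed by the first $D$ entries of column $l$ of $\mathcal{D}$. For an index pair $\theta(j)$, $\theta(j)_1,\theta(j)_2$ denote its two components. $\mathrm{vec}(X)$ stacks the columns of $X$ into a single column vector. *)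

theory Defs
  imports "Jordan_Normal_Form.DL_Rank"
begin

(* All indices are 0-based: paper index i corresponds to i-1 here. *)

datatype sharp = St | Mx

definition mrank :: "real mat \<Rightarrow> nat" where
  "mrank A = vec_space.rank (dim_row A) A"

definition hcat :: "'a mat \<Rightarrow> 'a mat \<Rightarrow> 'a mat" where
  "hcat A B = mat (dim_row A) (dim_col A + dim_col B)
     (\<lambda>(i,j). if j < dim_col A then A $$ (i,j) else B $$ (i, j - dim_col A))"

definition vecm :: "'a mat \<Rightarrow> 'a vec" where
  "vecm X = vec (dim_row X * dim_col X) (\<lambda>k. X $$ (k mod dim_row X, k div dim_row X))"

definition topleft :: "nat \<Rightarrow> 'a mat \<Rightarrow> 'a mat" where
  "topleft D A = mat D D (\<lambda>(i,j). A $$ (i,j))"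

definition compatible ::
  "nat \<Rightarrow> nat \<Rightarrow> nat \<Rightarrow> real mat \<Rightarrow> sharp \<Rightarrow> nat \<Rightarrow> (nat \<Rightarrow> nat \<times> nat) \<Rightarrow> (nat \<Rightarrow> real)
   \<Rightarrow> real mat \<Rightarrow> bool" where
  "compatible D W VK Dm s J \<theta> c G \<longleftrightarrow>
     (\<exists>Pst Pm. Pst \<in> carrier_mat D W \<and> Pm \<in> carrier_mat D VK \<and>
        G = transpose_mat (hcat Pst Pm) * hcat Pst Pm \<and>
        transpose_mat Pst * Pm = Dm \<and>
        (\<forall>j<J. (if s = St then transpose_mat Pst * Pst else transpose_mat Pm * Pm) $$ \<theta> j = c j))"

definition Nmat :: "nat \<Rightarrow> real mat \<Rightarrow> sharp \<Rightarrow> nat \<times> nat \<Rightarrow> real mat" where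
  "Nmat D Dm s ab = (case ab of (a,b) \<Rightarrow>
     (if s = St then
        mat D D (\<lambda>(i,l). (Dm $$ (a,i) * Dm $$ (b,l) + Dm $$ (b,i) * Dm $$ (a,l)) / 2)
      else
        mat D D (\<lambda>(i,l). (Dm $$ (i,a) * Dm $$ (l,b) + Dm $$ (i,b) * Dm $$ (l,a)) / 2)))"

definition Mmat :: "nat \<Rightarrow> real mat \<Rightarrow> sharp \<Rightarrow> nat \<Rightarrow> (nat \<Rightarrow> nat \<times> nat) \<Rightarrow> real mat" where
  "Mmat D Dm s J \<theta> = mat_of_cols (D * D) (map (\<lambda>j. vecm (Nmat D Dm s (\<theta> j))) [0..<J])"

end

theory Submission
  imports Defs "Jordan_Normal_Form.Gram_Schmidt" "Jordan_Normal_Form.DL_Rank_Submatrix"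
begin

text \<open>Write a compatible factor as \<open>P = (X | Y)\<close> with \<open>X\<^sup>T Y = Dm\<close>. The leading \<open>D \<times> D\<close> blocks
  \<open>A\<close> of \<open>X\<close> and \<open>B\<close> of \<open>Y\<close> satisfy \<open>A\<^sup>T B = topleft D Dm\<close>, so both are invertible, and
  \<open>X\<^sup>T X = U\<^sup>T K U\<close> with \<open>K = (B\<^sup>T B)\<^sup>-\<^sup>1\<close> symmetric and \<open>U\<close> the transpose of the first \<open>D\<close>
  columns of \<open>Dm\<close>; likewise \<open>Y\<^sup>T Y\<close> is determined by \<open>(A\<^sup>T A)\<^sup>-\<^sup>1\<close>, hence by \<open>X\<^sup>T X\<close>.
  So \<open>G\<close> is determined by \<open>K\<close>, which is only subject to the \<open>J\<close> linear constraints
  \<open>(U\<^sup>T K U)\<^bsub>\<theta>(j)\<^esub> = c\<^sub>j\<close>; on symmetric matrices these are the Frobenius products with the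
  \<open>N\<^sub>j\<close>, and they separate symmetric matrices iff \<open>rank M = D(D+1)/2\<close>. In that case \<open>K\<close>, and
  with it \<open>G\<close>, is unique. Otherwise a nonzero symmetric \<open>F\<close> annihilated by all constraints
  moves \<open>K\<close> to \<open>K + t F\<close>: the change of basis \<open>(X, Y) \<mapsto> (C X, C\<^sup>-\<^sup>T Y)\<close> with a Cholesky
  factor \<open>C\<^sup>T C = 1 + t B F B\<^sup>T\<close>, positive definite for small \<open>t > 0\<close>, keeps \<open>X\<^sup>T Y\<close> and the
  constraints but changes \<open>G\<close>. Every compatible \<open>G\<close> has rank \<open>D\<close>: \<open>P\<close> has \<open>D\<close> rows and
  \<open>topleft D Dm\<close> is a nonsingular minor of \<open>G\<close>. The case \<open>m\<close> is the case \<open>st\<close> for \<open>Dm\<^sup>T\<close>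
  with the two blocks exchanged.\<close>

abbreviation gram :: "'a::comm_ring mat \<Rightarrow> 'a mat" where
  "gram A \<equiv> transpose_mat A * A"

section \<open>Rank and spans\<close>

context vec_space
begin

lemma rank_mat_of_cols_mono:
  assumes xs: "set xs \<subseteq> carrier_vec n" and ys: "set ys \<subseteq> carrier_vec n"
    and span: "set xs \<subseteq> span (set ys)"
  shows "rank (mat_of_cols n xs) \<le> rank (mat_of_cols n ys)"
proof -
  have "span (set xs) \<subseteq> span (set ys)"
    using span_is_subset[OF span span_is_submodule[OF ys]] .
  then have sub: "VectorSpace.subspace class_ring (span (set xs)) (vs (span (set ys)))"
    using nested_subspaces[OF span_is_subspace[OF ys] span_is_subspace[OF xs]] by blast
  moreover have vs: "vectorspace class_ring (vs (span (set ys)))"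
    using span_is_subspace[OF ys] subspace_is_vs by auto
  ultimately have "vectorspace.dim class_ring ((vs (span (set ys)))\<lparr>carrier := span (set xs)\<rparr>)
      \<le> vectorspace.dim class_ring (vs (span (set ys)))"
    using vectorspace.subspace_dim[OF vs sub] fin_dim_span[of "set ys"] fin_dim_span[of "set xs"] xs ys
    by simp
  then show ?thesis unfolding rank_def using xs ys by simp
qed

lemma rank_le_nr:
  assumes "A \<in> carrier_mat n nc"
  shows "rank A \<le> n"
proof -
  have "set (cols A) \<subseteq> carrier_vec n" using assms cols_dim by blast
  then have "vectorspace.dim class_ring (vs (span (set (cols A)))) \<le> dim"
    using subspace_dim[OF span_is_subspace fin_dim fin_dim_span_cols[OF assms]] by blast
  then show ?thesis unfolding rank_def dim_is_n .
qed

lemma exists_lin_indpt_spanning_sublist: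
  assumes cs: "set cs \<subseteq> carrier_vec n"
  obtains ws where "distinct ws" "set ws \<subseteq> set cs" "lin_indpt (set ws)" "set cs \<subseteq> span (set ws)"
    "rank (mat_of_cols n cs) = length ws"
proof -
  obtain S where max: "maximal S (\<lambda>T. T \<subseteq> set cs \<and> lin_indpt T)"
    using maximal_exists[of "\<lambda>T. T \<subseteq> set cs \<and> lin_indpt T" "card (set cs)" "{}"]
    by (meson List.finite_set card_mono empty_iff empty_subsetI finite_lin_indpt2 rev_finite_subset)
  have S: "S \<subseteq> set cs" "lin_indpt S" using max unfolding maximal_def by auto
  have Sc: "S \<subseteq> carrier_vec n" using S cs by blast
  have span: "set cs \<subseteq> span S"
  proof
    fix s assume s: "s \<in> set cs"
    show "s \<in> span S"
    proof (rule ccontr)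
      assume ns: "s \<notin> span S"
      then have "s \<notin> S" using span_mem[OF Sc] by auto
      then have "lin_indpt (S \<union> {s})"
        using lin_dep_iff_in_span[OF Sc S(2)] ns s cs by auto
      then have "S \<union> {s} = S" using max s S(1) unfolding maximal_def by blast
      with \<open>s \<notin> S\<close> show False by auto
    qed
  qed
  have rk: "rank (mat_of_cols n cs) = card S"
    using rank_card_indpt[OF mat_of_cols_carrier(1)] max cs by simp
  obtain ws where ws: "set ws = S" "distinct ws"
    using finite_distinct_list[OF finite_subset[OF S(1)]] by blast
  show ?thesis
    by (rule that[of ws]) (use ws S span rk distinct_card[OF ws(2)] in auto)
qed

end

lemma conjugate_real_vec [simp]: "conjugate (v :: real vec) = v"
  by (rule eq_vecI) auto

lemma gram_schmidt_snoc: "\<exists>x. gram_schmidt n (ws @ [b]) = gram_schmidt n ws @ [x]"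
proof -
  have "gram_schmidt_sub n us (ws @ [b]) = gram_schmidt_sub n (gram_schmidt_sub n us ws) [b]" for us
    by (induct ws arbitrary: us) auto
  then show ?thesis unfolding gram_schmidt_def by simp
qed

context cof_vec_space
begin

lemma exists_orthogonal_in_span_snoc:
  assumes ws: "set ws \<subseteq> carrier_vec n" "distinct ws" "lin_indpt (set ws)"
    and b: "b \<in> carrier_vec n" "b \<notin> span (set ws)"
  obtains x where "x \<in> span (set (ws @ [b]))" "x \<in> carrier_vec n" "x \<bullet>c x \<noteq> 0"
    "\<And>w. w \<in> span (set ws) \<Longrightarrow> w \<bullet>c x = 0"
proof -
  have "b \<notin> set ws" using b span_mem[OF ws(1)] by auto
  then have wb: "set (ws @ [b]) \<subseteq> carrier_vec n" "distinct (ws @ [b])" "lin_indpt (set (ws @ [b]))"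
    using ws b lin_dep_iff_in_span[OF ws(1) ws(3) b(1)] by auto
  define gs where "gs = gram_schmidt n ws"
  obtain x where gsx: "gram_schmidt n (ws @ [b]) = gs @ [x]"
    using gram_schmidt_snoc unfolding gs_def by blast
  note GX = gram_schmidt_result[OF wb gsx[symmetric]]
  note GS = gram_schmidt_result[OF ws gs_def]
  have xs: "x \<in> span (set (ws @ [b]))" using GX(1,3) span_mem by auto
  have xx: "x \<bullet>c x \<noteq> 0" using corthogonalD[OF GX(2), of "length gs" "length gs"] by simp
  have xc: "x \<in> carrier_vec n" using GX(3) by simp
  have orth: "w \<bullet>c x = 0" if "w \<in> span (set ws)" for w
  proof -
    have cxc: "conjugate x \<in> carrier_vec n" using xc by simp
    have "conjugate x \<bullet> y = 0" if y: "y \<in> set gs" for y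
    proof -
      obtain i where i: "i < length gs" "y = gs ! i" using y by (auto simp: in_set_conv_nth)
      then have "y \<bullet>c x = 0"
        using corthogonalD[OF GX(2), of i "length gs"] by (simp add: nth_append)
      then show ?thesis using comm_scalar_prod[OF cxc, of y] GS(3) y by auto
    qed
    then have "conjugate x \<in> orthogonal_complement (set gs)"
      unfolding orthogonal_complement_def using cxc by blast
    then have "conjugate x \<in> orthogonal_complement (span (set ws))"
      unfolding GS(1) in_orthogonal_complement_span[OF GS(3)] .
    moreover have "w \<in> carrier_vec n" using that span_closed[OF ws(1)] by blast
    ultimately show ?thesis
      unfolding orthogonal_complement_def using that comm_scalar_prod[OF cxc, of w] by simp
  qed
  show ?thesis by (rule that[OF xs xc xx orth])
qed

end

section \<open>Symmetric vectors of dimension D*D\<close>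

text \<open>Entry \<open>i + l * D\<close> of a vector of dimension \<open>D * D\<close> is entry \<open>(i, l)\<close> of the
  \<open>D \<times> D\<close> matrix it stacks (cf. \<open>vecm\<close>).\<close>

definition sym_vec :: "nat \<Rightarrow> 'a vec \<Rightarrow> bool" where
  "sym_vec D f \<longleftrightarrow> (\<forall>i<D. \<forall>l<D. f $ (i + l * D) = f $ (l + i * D))"

definition sym_unit :: "nat \<Rightarrow> nat \<Rightarrow> nat \<Rightarrow> 'a::zero_neq_one vec" where
  "sym_unit D i l = vec (D * D)
     (\<lambda>k. if (k mod D = i \<and> k div D = l) \<or> (k mod D = l \<and> k div D = i) then 1 else 0)"

definition upper_pairs :: "nat \<Rightarrow> (nat \<times> nat) list" where
  "upper_pairs D = concat (map (\<lambda>l. map (\<lambda>i. (i, l)) [0..<Suc l]) [0..<D])"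

definition sym_units :: "nat \<Rightarrow> 'a::zero_neq_one vec list" where
  "sym_units D = map (\<lambda>(i, l). sym_unit D i l) (upper_pairs D)"

lemma set_upper_pairs: "set (upper_pairs D) = {(i, l). i \<le> l \<and> l < D}"
  unfolding upper_pairs_def by (auto simp: image_iff less_Suc_eq_le)

lemma upper_pairs_Suc: "upper_pairs (Suc D) = upper_pairs D @ map (\<lambda>i. (i, D)) [0..<Suc D]"
  unfolding upper_pairs_def by simp

lemma distinct_upper_pairs: "distinct (upper_pairs D)"
  by (induct D) (auto simp: upper_pairs_Suc set_upper_pairs distinct_map inj_on_def,
      simp add: upper_pairs_def)

lemma length_upper_pairs: "length (upper_pairs D) = D * (D + 1) div 2"
proof -
  have "2 * length (upper_pairs D) = D * (D + 1)"
    by (induct D) (simp_all add: upper_pairs_Suc upper_pairs_def[of 0] algebra_simps)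
  then show ?thesis by simp
qed

lemma pair_index_less: "i < D \<Longrightarrow> l < D \<Longrightarrow> i + l * D < D * (D::nat)"
proof -
  assume "i < D" "l < D"
  then have "i + l * D < Suc l * D" by simp
  also have "\<dots> \<le> D * D" using mult_le_mono1[of "Suc l" D D] \<open>l < D\<close> by simp
  finally show ?thesis .
qed

lemma mod_div_less_of_less_square:
  assumes "k < D * (D::nat)"
  shows "k mod D < D" "k div D < D"
proof -
  have "0 < D" using assms by (cases D) auto
  then show "k mod D < D" "k div D < D" using assms by (auto simp: less_mult_imp_div_less)
qed

lemma sym_unit_index:
  assumes "i < D" "l < D"
  shows "sym_unit D i' l' $ (i + l * D) = (if (i = i' \<and> l = l') \<or> (i = l' \<and> l = i') then 1 else 0)"
  unfolding sym_unit_def using assms by (simp add: pair_index_less)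

lemma sym_unit_index_sorted:
  assumes "k < D * D" "i \<le> l"
  shows "sym_unit D i l $ k
    = (if (i, l) = (min (k mod D) (k div D), max (k mod D) (k div D)) then 1 else 0)"
proof -
  have "(p = i \<and> q = l \<or> p = l \<and> q = i) \<longleftrightarrow> (i, l) = (min p q, max p q)" for p q :: nat
    using assms(2) by (auto simp: min_def max_def)
  then show ?thesis unfolding sym_unit_def using assms(1) by simp
qed

lemma sym_unit_carrier [simp]: "sym_unit D i l \<in> carrier_vec (D * D)"
  unfolding sym_unit_def by simp

lemma sym_vec_sym_unit: "sym_vec D (sym_unit D i l)"
  unfolding sym_vec_def by (auto simp: sym_unit_index)

lemma mem_sym_units: "x \<in> set (sym_units D) \<longleftrightarrow> (\<exists>i l. i \<le> l \<and> l < D \<and> x = sym_unit D i l)"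
  unfolding sym_units_def by (force simp: set_upper_pairs)

lemma sym_units_carrier: "set (sym_units D) \<subseteq> carrier_vec (D * D)"
  unfolding sym_units_def by auto

lemma sym_units_sym_vec: "b \<in> set (sym_units D) \<Longrightarrow> sym_vec D b"
  unfolding sym_units_def using sym_vec_sym_unit by auto

lemma sym_unit_inj:
  assumes "i \<le> l" "l < D" "i' \<le> l'" "l' < D"
    and "(sym_unit D i l :: 'a::zero_neq_one vec) = sym_unit D i' l'"
  shows "i = i' \<and> l = l'"
proof -
  have "(sym_unit D i l :: 'a vec) $ (i + l * D) = 1"
    using sym_unit_index[of i D l i l] assms(1,2) by simp
  then have "(sym_unit D i' l' :: 'a vec) $ (i + l * D) = 1"
    using assms(5) by simp
  then have "(i = i' \<and> l = l') \<or> (i = l' \<and> l = i')"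
    using sym_unit_index[of i D l i' l'] assms(1,2) by (metis le_less_trans zero_neq_one)
  then show ?thesis using assms(1,3) by auto
qed

lemma inj_on_sym_unit:
  "inj_on (\<lambda>(i, l). sym_unit D i l :: 'a::zero_neq_one vec) {(i, l). i \<le> l \<and> l < D}"
  by (auto intro!: inj_onI dest: sym_unit_inj)

lemma distinct_sym_units: "distinct (sym_units D :: 'a::zero_neq_one vec list)"
  unfolding sym_units_def distinct_map
  using distinct_upper_pairs inj_on_sym_unit set_upper_pairs by metis

lemma length_sym_units: "length (sym_units D) = D * (D + 1) div 2"
  unfolding sym_units_def by (simp add: length_upper_pairs)

lemma sym_unit_index_upper:
  assumes "i \<le> l" "l < D" "i' \<le> l'" "l' < D"
  shows "sym_unit D i' l' $ (i + l * D) = (if i = i' \<and> l = l' then 1 else 0)"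
  using assms by (subst sym_unit_index) auto

context vec_space
begin

lemma lin_indpt_sym_units:
  assumes n: "n = D * D"
  shows "lin_indpt (set (sym_units D))"
proof
  assume "lin_dep (set (sym_units D))"
  then obtain A a v where fin: "finite A" and A: "A \<subseteq> set (sym_units D)"
    and lc: "lincomb a A = 0\<^sub>v n" and v: "v \<in> A" and av: "a v \<noteq> 0"
    unfolding lin_dep_def by auto
  have "v \<in> set (sym_units D)" using v A by blast
  then obtain i l where il: "i \<le> l" "l < D" "v = sym_unit D i l"
    unfolding mem_sym_units by blast
  have k: "i + l * D < n" using il n pair_index_less[of i D l] by auto
  have Ac: "A \<subseteq> carrier_vec n" using A sym_units_carrier n by blast
  have "x $ (i + l * D) = (if x = v then 1 else 0)" if "x \<in> A" for x
  proof -
    have "x \<in> set (sym_units D)" using \<open>x \<in> A\<close> A by blast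
    then obtain i' l' where x: "i' \<le> l'" "l' < D" "x = sym_unit D i' l'"
      unfolding mem_sym_units by blast
    show ?thesis
    proof (cases "i = i' \<and> l = l'")
      case True
      then show ?thesis using il x sym_unit_index_upper[OF il(1,2) x(1,2)] by simp
    next
      case False
      then have "x \<noteq> v" using sym_unit_inj[OF il(1,2) x(1,2)] il(3) x(3) by metis
      then show ?thesis using False x(3) sym_unit_index_upper[OF il(1,2) x(1,2)] by auto
    qed
  qed
  then have "lincomb a A $ (i + l * D) = (\<Sum>x\<in>A. if x = v then a x else 0)"
    unfolding lincomb_index[OF k Ac] by (intro sum.cong) auto
  also have "\<dots> = a v" using fin v by simp
  finally show False using lc k av by simp
qed

lemma sym_vec_in_span_sym_units:
  assumes n: "n = D * D" and f: "f \<in> carrier_vec n" and sym: "sym_vec D f"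
  shows "f \<in> span (set (sym_units D))"
proof -
  define P where "P = {(i, l). i \<le> l \<and> l < D}"
  define u where "u = (\<lambda>(i, l). sym_unit D i l :: 'a vec)"
  have inj: "inj_on u P" unfolding u_def P_def by (rule inj_on_sym_unit)
  have units: "set (sym_units D) = u ` P"
    unfolding sym_units_def u_def P_def set_upper_pairs[symmetric] by simp
  have uc: "set (sym_units D) \<subseteq> carrier_vec n" using sym_units_carrier n by simp
  define a where "a = (\<lambda>x. f $ (fst (inv_into P u x) + snd (inv_into P u x) * D))"
  have "f = lincomb a (set (sym_units D))"
  proof (rule eq_vecI)
    show dim: "dim_vec f = dim_vec (lincomb a (set (sym_units D)))"
      using f lincomb_closed[OF uc, of a] by (metis carrier_vecD)
    fix k assume "k < dim_vec (lincomb a (set (sym_units D)))"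
    then have k: "k < n" using f dim by simp
    define p where "p = k mod D"
    define q where "q = k div D"
    have pq: "p < D" "q < D" "k = p + q * D"
      using mod_div_less_of_less_square[of k D] k n unfolding p_def q_def by auto
    have fk: "f $ (min p q + max p q * D) = f $ k"
      using sym pq unfolding sym_vec_def by (cases "p \<le> q") (auto simp: min_def max_def)
    have "lincomb a (set (sym_units D)) $ k = (\<Sum>x\<in>P. a (u x) * u x $ k)"
      using lincomb_index[OF k uc] sum.reindex[OF inj] unfolding units by simp
    also have "\<dots> = (\<Sum>x\<in>P. if x = (min p q, max p q) then f $ k else 0)"
    proof (rule sum.cong)
      fix x assume "x \<in> P"
      then obtain i l where x: "x = (i, l)" "i \<le> l" unfolding P_def by auto
      have "a (u x) = f $ (i + l * D)" unfolding a_def using inv_into_f_f[OF inj \<open>x \<in> P\<close>] x by simp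
      then show "a (u x) * u x $ k = (if x = (min p q, max p q) then f $ k else 0)"
        using sym_unit_index_sorted[OF _ x(2), of k D, folded p_def q_def] k n fk x unfolding u_def by auto
    qed simp
    also have "\<dots> = f $ k"
    proof -
      have "finite P" unfolding P_def by (rule finite_subset[of _ "{..<D} \<times> {..<D}"]) auto
      moreover have "(min p q, max p q) \<in> P" unfolding P_def using pq by auto
      ultimately show ?thesis by simp
    qed
    finally show "f $ k = lincomb a (set (sym_units D)) $ k" by simp
  qed
  then show ?thesis using finite_span[OF finite_set uc] by auto
qed

lemma sym_vec_span:
  assumes n: "n = D * D" and xs: "set xs \<subseteq> carrier_vec n" and sym: "\<And>x. x \<in> set xs \<Longrightarrow> sym_vec D x"
    and v: "v \<in> span (set xs)"
  shows "sym_vec D v"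
proof -
  obtain a where v: "v = lincomb a (set xs)"
    using v unfolding finite_span[OF finite_set xs] by auto
  show ?thesis unfolding sym_vec_def
  proof (intro allI impI)
    fix i l assume "i < D" "l < D"
    then have k1: "i + l * D < n" and k2: "l + i * D < n" using n pair_index_less by auto
    show "v $ (i + l * D) = v $ (l + i * D)"
      unfolding v lincomb_index[OF k1 xs] lincomb_index[OF k2 xs] using sym \<open>i < D\<close> \<open>l < D\<close>
      by (intro sum.cong) (auto simp: sym_vec_def)
  qed
qed

lemma rank_sym_units:
  assumes "n = D * D"
  shows "rank (mat_of_cols n (sym_units D)) = D * (D + 1) div 2"
proof -
  have "cols (mat_of_cols n (sym_units D)) = sym_units D"
    unfolding assms by (rule cols_mat_of_cols[OF sym_units_carrier])
  then have "rank (mat_of_cols n (sym_units D)) = length (sym_units D :: 'a vec list)"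
    using lin_indpt_full_rank[OF mat_of_cols_carrier(1), of "sym_units D"]
      distinct_sym_units[of D, where 'a='a] lin_indpt_sym_units[OF assms] by metis
  then show ?thesis by (simp add: length_sym_units)
qed

lemma rank_sym_cols_le:
  assumes n: "n = D * D" and xs: "set xs \<subseteq> carrier_vec n" and sym: "\<And>x. x \<in> set xs \<Longrightarrow> sym_vec D x"
  shows "rank (mat_of_cols n xs) \<le> D * (D + 1) div 2"
proof -
  have "set xs \<subseteq> span (set (sym_units D))"
    using sym_vec_in_span_sym_units[OF n] xs sym by blast
  then show ?thesis
    using rank_mat_of_cols_mono[OF xs, of "sym_units D"] sym_units_carrier[of D, where 'a='a]
      rank_sym_units[OF n] n by simp
qed

end

lemma sym_orthogonal_zero_if_full_rank:
  fixes cs :: "real vec list"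
  assumes cs: "set cs \<subseteq> carrier_vec (D * D)" and sym: "\<And>c. c \<in> set cs \<Longrightarrow> sym_vec D c"
    and full: "vec_space.rank (D * D) (mat_of_cols (D * D) cs) = D * (D + 1) div 2"
    and f: "f \<in> carrier_vec (D * D)" "sym_vec D f" and orth: "\<And>c. c \<in> set cs \<Longrightarrow> c \<bullet> f = 0"
  shows "f = 0\<^sub>v (D * D)"
proof (rule ccontr)
  interpret V: vec_space "TYPE(real)" "D * D" .
  assume nz: "f \<noteq> 0\<^sub>v (D * D)"
  obtain ws where ws: "distinct ws" "set ws \<subseteq> set cs" "V.lin_indpt (set ws)"
    "set cs \<subseteq> V.span (set ws)" "V.rank (mat_of_cols (D * D) cs) = length ws"
    using V.exists_lin_indpt_spanning_sublist[OF cs] .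
  have wc: "set ws \<subseteq> carrier_vec (D * D)" using ws(2) cs by auto
  have "f \<notin> V.span (set ws)"
  proof
    assume fs: "f \<in> V.span (set ws)"
    have "f \<bullet> w = 0" if "w \<in> set ws" for w
    proof -
      have "w \<in> set cs" using that ws(2) by blast
      then show ?thesis using orth[of w] comm_scalar_prod[OF f(1), of w] cs by auto
    qed
    then have "f \<in> V.orthogonal_complement (set ws)"
      unfolding V.orthogonal_complement_def using f(1) by blast
    then have "f \<in> V.orthogonal_complement (V.span (set ws))"
      using V.in_orthogonal_complement_span[OF wc] by simp
    then have "f \<bullet> f = 0" using fs unfolding V.orthogonal_complement_def by blast
    then show False using conjugate_square_eq_0_vec[OF f(1)] nz by simp
  qed
  then have "f \<notin> set ws" "V.lin_indpt (insert f (set ws))"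
    using V.span_mem[OF wc] V.lin_dep_iff_in_span[OF wc ws(3) f(1)] by auto
  then have "V.rank (mat_of_cols (D * D) (f # ws)) = length ws + 1"
    using V.lin_indpt_full_rank[OF mat_of_cols_carrier(1), of "f # ws"] wc f(1) ws(1) by simp
  moreover have "V.rank (mat_of_cols (D * D) (f # ws)) \<le> D * (D + 1) div 2"
    using V.rank_sym_cols_le[OF refl, of "f # ws"] wc f sym ws(2) by auto
  ultimately show False using full ws(5) by simp
qed

lemma full_rank_if_no_sym_orthogonal:
  fixes cs :: "real vec list"
  assumes cs: "set cs \<subseteq> carrier_vec (D * D)" and sym: "\<And>c. c \<in> set cs \<Longrightarrow> sym_vec D c"
    and no_orth: "\<And>f. f \<in> carrier_vec (D * D) \<Longrightarrow> sym_vec D f \<Longrightarrow> \<forall>c\<in>set cs. c \<bullet> f = 0 \<Longrightarrow>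
      f = 0\<^sub>v (D * D)"
  shows "vec_space.rank (D * D) (mat_of_cols (D * D) cs) = D * (D + 1) div 2"
proof (rule ccontr)
  interpret V: cof_vec_space "D * D" "TYPE(real)" .
  assume deficient: "V.rank (mat_of_cols (D * D) cs) \<noteq> D * (D + 1) div 2"
  obtain ws where ws: "distinct ws" "set ws \<subseteq> set cs" "V.lin_indpt (set ws)"
    "set cs \<subseteq> V.span (set ws)" "V.rank (mat_of_cols (D * D) cs) = length ws"
    using V.exists_lin_indpt_spanning_sublist[OF cs] .
  have wc: "set ws \<subseteq> carrier_vec (D * D)" using ws(2) cs by auto
  have "\<not> set (sym_units D) \<subseteq> V.span (set ws)"
  proof
    assume "set (sym_units D) \<subseteq> V.span (set ws)"
    then have "D * (D + 1) div 2 \<le> length ws"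
      using V.rank_mat_of_cols_mono[OF sym_units_carrier wc] V.rank_sym_units[OF refl]
        V.lin_indpt_full_rank[OF mat_of_cols_carrier(1), of ws] wc ws(1,3) by simp
    then show False
      using V.rank_sym_cols_le[OF refl cs sym] deficient ws(5) by simp
  qed
  then obtain b where b: "b \<in> set (sym_units D)" "b \<notin> V.span (set ws)" by blast
  have bc: "b \<in> carrier_vec (D * D)" using b(1) sym_units_carrier by blast
  obtain x where x: "x \<in> V.span (set (ws @ [b]))" "x \<in> carrier_vec (D * D)" "x \<bullet>c x \<noteq> 0"
    and orth: "\<And>w. w \<in> V.span (set ws) \<Longrightarrow> w \<bullet>c x = 0"
    using V.exists_orthogonal_in_span_snoc[OF wc ws(1,3) bc b(2)] by blast
  have "sym_vec D y" if "y \<in> set (ws @ [b])" for y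
    using that sym ws(2) sym_units_sym_vec[OF b(1)] by auto
  then have "sym_vec D x" using V.sym_vec_span[OF refl _ _ x(1)] wc bc by auto
  moreover have "\<forall>c\<in>set cs. c \<bullet> x = 0" using orth ws(4) by auto
  ultimately have "x = 0\<^sub>v (D * D)" using no_orth x(2) by blast
  then show False using x(3) by simp
qed

section \<open>Stacked matrices and the rank of M\<close>

lemma sum_mod_div_square:
  fixes g :: "nat \<Rightarrow> nat \<Rightarrow> 'a::comm_monoid_add"
  shows "(\<Sum>k<D * D. g (k mod D) (k div D)) = (\<Sum>i<D. \<Sum>l<D. g i l)"
proof -
  have "(\<Sum>k<D * D. g (k mod D) (k div D)) = (\<Sum>p\<in>{..<D} \<times> {..<D}. g (fst p) (snd p))"
    by (rule sum.reindex_bij_witness[of _ "\<lambda>p. fst p + snd p * D" "\<lambda>k. (k mod D, k div D)"])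
      (auto simp: pair_index_less mod_div_less_of_less_square)
  also have "\<dots> = (\<Sum>i<D. \<Sum>l<D. g i l)" by (simp add: sum.cartesian_product split_def)
  finally show ?thesis .
qed

lemma vecm_carrier: "F \<in> carrier_mat D D \<Longrightarrow> vecm F \<in> carrier_vec (D * D)"
  unfolding vecm_def by auto

lemma vecm_index:
  assumes "F \<in> carrier_mat D D" "i < D" "l < D"
  shows "vecm F $ (i + l * D) = F $$ (i, l)"
  unfolding vecm_def using assms pair_index_less[of i D l] by simp

lemma vecm_mat_of_index:
  assumes "f \<in> carrier_vec (D * D)"
  shows "vecm (mat D D (\<lambda>(i, l). f $ (i + l * D))) = f"
proof (rule eq_vecI)
  fix k assume "k < dim_vec f"
  then have "k < D * D" using assms by simp
  note mod_div_less_of_less_square[OF this]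
  then show "vecm (mat D D (\<lambda>(i, l). f $ (i + l * D))) $ k = f $ k"
    unfolding vecm_def using \<open>k < D * D\<close> by simp
qed (use assms in \<open>simp add: vecm_def\<close>)

lemma sym_vec_vecm:
  assumes "F \<in> carrier_mat D D" "transpose_mat F = F"
  shows "sym_vec D (vecm F)"
  unfolding sym_vec_def using vecm_index[OF assms(1)] assms
  by (metis carrier_matD index_transpose_mat(1))

lemma vecm_eq_zero_iff:
  assumes "F \<in> carrier_mat D D"
  shows "vecm F = 0\<^sub>v (D * D) \<longleftrightarrow> F = 0\<^sub>m D D"
proof
  assume "vecm F = 0\<^sub>v (D * D)"
  then have "F $$ (i, l) = 0" if "i < D" "l < D" for i l
    using vecm_index[OF assms that] pair_index_less[OF that] by simp
  then show "F = 0\<^sub>m D D" using assms by (intro eq_matI) auto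
qed (auto simp: vecm_def mod_div_less_of_less_square intro!: eq_vecI)

text \<open>\<open>row_form D Dm F (a, b)\<close> is the \<open>(a, b)\<close> entry of \<open>C F C\<^sup>T\<close>, where \<open>C\<close> consists of
  the first \<open>D\<close> columns of \<open>Dm\<close>; against a symmetric \<open>F\<close> it is the Frobenius product of \<open>F\<close>
  with the paper's \<open>N\<^sup>(\<^sup>s\<^sup>t\<^sup>)\<close> for the index pair \<open>(a, b)\<close>.\<close>

definition row_form :: "nat \<Rightarrow> real mat \<Rightarrow> real mat \<Rightarrow> nat \<times> nat \<Rightarrow> real" where
  "row_form D Dm F ab = (case ab of (a, b) \<Rightarrow>
     \<Sum>i<D. \<Sum>l<D. Dm $$ (a, i) * F $$ (i, l) * Dm $$ (b, l))"

lemma Nmat_carrier: "Nmat D Dm s ab \<in> carrier_mat D D"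
  unfolding Nmat_def by (cases ab) auto

lemma transpose_Nmat_St: "transpose_mat (Nmat D Dm St ab) = Nmat D Dm St ab"
  unfolding Nmat_def by (cases ab) (auto simp: algebra_simps)

lemma vecm_Nmat_St_scalar_prod:
  assumes F: "F \<in> carrier_mat D D" and sym: "transpose_mat F = F"
  shows "vecm (Nmat D Dm St ab) \<bullet> vecm F = row_form D Dm F ab"
proof -
  obtain a b where ab: "ab = (a, b)" by (cases ab)
  have Fs: "F $$ (l, i) = F $$ (i, l)" if "i < D" "l < D" for i l
    using sym F that by (metis carrier_matD index_transpose_mat(1))
  have "vecm (Nmat D Dm St ab) \<bullet> vecm F = (\<Sum>i<D. \<Sum>l<D. Nmat D Dm St ab $$ (i, l) * F $$ (i, l))"
    using F Nmat_carrier[of D Dm St ab] sum_mod_div_square[of "\<lambda>i l. Nmat D Dm St ab $$ (i, l) * F $$ (i, l)"]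
    unfolding scalar_prod_def vecm_def by (simp add: lessThan_atLeast0)
  also have "\<dots> = (\<Sum>i<D. \<Sum>l<D. (Dm $$ (a, i) * F $$ (i, l) * Dm $$ (b, l)
      + Dm $$ (b, i) * F $$ (i, l) * Dm $$ (a, l)) / 2)"
    unfolding ab Nmat_def by (intro sum.cong) (simp_all add: field_simps)
  also have "\<dots> = ((\<Sum>i<D. \<Sum>l<D. Dm $$ (a, i) * F $$ (i, l) * Dm $$ (b, l))
      + (\<Sum>i<D. \<Sum>l<D. Dm $$ (b, i) * F $$ (i, l) * Dm $$ (a, l))) / 2"
    by (simp only: sum_divide_distrib[symmetric] sum.distrib)
  also have "(\<Sum>i<D. \<Sum>l<D. Dm $$ (b, i) * F $$ (i, l) * Dm $$ (a, l))
      = (\<Sum>i<D. \<Sum>l<D. Dm $$ (a, i) * F $$ (i, l) * Dm $$ (b, l))"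
    by (subst sum.swap) (simp add: Fs mult_ac)
  finally show ?thesis unfolding ab row_form_def by simp
qed

definition sym_annihilator_trivial :: "nat \<Rightarrow> real mat \<Rightarrow> nat \<Rightarrow> (nat \<Rightarrow> nat \<times> nat) \<Rightarrow> bool" where
  "sym_annihilator_trivial D Dm J \<theta> \<longleftrightarrow>
     (\<forall>F\<in>carrier_mat D D. transpose_mat F = F \<longrightarrow> (\<forall>j<J. row_form D Dm F (\<theta> j) = 0) \<longrightarrow> F = 0\<^sub>m D D)"

lemma rank_Mmat_St_iff:
  "mrank (Mmat D Dm St J \<theta>) = D * (D + 1) div 2 \<longleftrightarrow> sym_annihilator_trivial D Dm J \<theta>"
proof -
  define cs where "cs = map (\<lambda>j. vecm (Nmat D Dm St (\<theta> j))) [0..<J]"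
  have cs: "set cs \<subseteq> carrier_vec (D * D)"
    unfolding cs_def by (auto intro!: vecm_carrier Nmat_carrier)
  have sym: "sym_vec D c" if "c \<in> set cs" for c
    using that unfolding cs_def by (auto intro: sym_vec_vecm[OF Nmat_carrier transpose_Nmat_St])
  have rank: "mrank (Mmat D Dm St J \<theta>) = vec_space.rank (D * D) (mat_of_cols (D * D) cs)"
    unfolding mrank_def Mmat_def cs_def by simp
  have orth: "(\<forall>c\<in>set cs. c \<bullet> vecm F = 0) \<longleftrightarrow> (\<forall>j<J. row_form D Dm F (\<theta> j) = 0)"
    if "F \<in> carrier_mat D D" "transpose_mat F = F" for F
    using vecm_Nmat_St_scalar_prod[OF that] unfolding cs_def by auto
  show ?thesis unfolding rank sym_annihilator_trivial_def
  proof (intro iffI ballI impI)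
    fix F :: "real mat"
    assume "vec_space.rank (D * D) (mat_of_cols (D * D) cs) = D * (D + 1) div 2"
      and F: "F \<in> carrier_mat D D" "transpose_mat F = F" "\<forall>j<J. row_form D Dm F (\<theta> j) = 0"
    then have "vecm F = 0\<^sub>v (D * D)"
      using sym_orthogonal_zero_if_full_rank[OF cs sym] vecm_carrier sym_vec_vecm orth by blast
    then show "F = 0\<^sub>m D D" using vecm_eq_zero_iff[OF F(1)] by simp
  next
    assume triv: "\<forall>F\<in>carrier_mat D D. transpose_mat F = F \<longrightarrow>
      (\<forall>j<J. row_form D Dm F (\<theta> j) = 0) \<longrightarrow> F = 0\<^sub>m D D"
    show "vec_space.rank (D * D) (mat_of_cols (D * D) cs) = D * (D + 1) div 2"
    proof (rule full_rank_if_no_sym_orthogonal[OF cs sym])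
      fix f :: "real vec"
      assume f: "f \<in> carrier_vec (D * D)" "sym_vec D f" "\<forall>c\<in>set cs. c \<bullet> f = 0"
      define F where "F = mat D D (\<lambda>(i, l). f $ (i + l * D))"
      have F: "F \<in> carrier_mat D D" "vecm F = f" unfolding F_def using vecm_mat_of_index[OF f(1)] by auto
      have "transpose_mat F = F" using f(2) unfolding F_def sym_vec_def by (intro eq_matI) auto
      then have "F = 0\<^sub>m D D" using triv F orth f(3) by blast
      then show "f = 0\<^sub>v (D * D)" using F vecm_eq_zero_iff by blast
    qed
  qed
qed

definition incl_mat :: "nat \<Rightarrow> nat \<Rightarrow> real mat" where
  "incl_mat m k = mat m k (\<lambda>(a, i). if a = i then 1 else 0)"

lemma incl_mat_carrier [simp]: "incl_mat m k \<in> carrier_mat m k"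
  unfolding incl_mat_def by simp

lemma mult_incl_mat:
  assumes A: "A \<in> carrier_mat r m" and k: "k \<le> m"
  shows "A * incl_mat m k = mat r k (\<lambda>(i, l). A $$ (i, l))"
proof (rule eq_matI)
  fix i l assume "i < dim_row (mat r k (\<lambda>(i, l). A $$ (i, l)))" "l < dim_col (mat r k (\<lambda>(i, l). A $$ (i, l)))"
  then have il: "i < r" "l < k" by auto
  have "(A * incl_mat m k) $$ (i, l) = (\<Sum>a\<in>{0..<m}. A $$ (i, a) * (if a = l then 1 else 0))"
    using A il k unfolding incl_mat_def by (auto simp: scalar_prod_def intro!: sum.cong)
  also have "\<dots> = A $$ (i, l)" using il k by (simp add: if_distrib cong: if_cong)
  finally show "(A * incl_mat m k) $$ (i, l) = mat r k (\<lambda>(i, l). A $$ (i, l)) $$ (i, l)" using il by simp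
qed (use A in \<open>auto simp: incl_mat_def\<close>)

lemma transpose_incl_mat_mult:
  assumes A: "A \<in> carrier_mat m c" and k: "k \<le> m"
  shows "transpose_mat (incl_mat m k) * A = mat k c (\<lambda>(i, l). A $$ (i, l))"
proof -
  have "transpose_mat (incl_mat m k) * A = transpose_mat (transpose_mat A * incl_mat m k)"
    using transpose_mult[of "transpose_mat A" c m "incl_mat m k" k] A by simp
  also have "\<dots> = mat k c (\<lambda>(i, l). A $$ (i, l))"
    using mult_incl_mat[of "transpose_mat A" c m k] A k by (auto intro!: eq_matI)
  finally show ?thesis .
qed

lemma topleft_eq_incl_mat:
  assumes "Dm \<in> carrier_mat W VK" "D \<le> W" "D \<le> VK"
  shows "transpose_mat (incl_mat W D) * Dm * incl_mat VK D = topleft D Dm"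
  using transpose_incl_mat_mult[OF assms(1,2)] mult_incl_mat[of _ D VK D] assms
  unfolding topleft_def by (auto intro!: eq_matI)

lemma det_nonzero_imp_inverse:
  fixes A :: "'a::field mat"
  assumes "A \<in> carrier_mat n n" "det A \<noteq> 0"
  obtains B where "B \<in> carrier_mat n n" "B * A = 1\<^sub>m n" "A * B = 1\<^sub>m n"
proof -
  have "A \<in> Units (ring_mat TYPE('a) n undefined)" by (rule det_non_zero_imp_unit[OF assms])
  then show ?thesis using that unfolding Units_def by (auto simp: ring_mat_simps)
qed

lemma left_inverse_unique:
  fixes A B B' :: "'a::comm_ring_1 mat"
  assumes "A \<in> carrier_mat n n" "B \<in> carrier_mat n n" "B' \<in> carrier_mat n n"
    and "B * A = 1\<^sub>m n" "A * B' = 1\<^sub>m n"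
  shows "B = B'"
proof -
  have "B = B * (A * B')" using assms(2,5) by simp
  also have "\<dots> = (B * A) * B'" using assms(1-3) by (simp add: assoc_mult_mat)
  also have "\<dots> = B'" using assms(3,4) by simp
  finally show ?thesis .
qed

lemma inverse_gram:
  fixes A Ai :: "'a::field mat"
  assumes A: "A \<in> carrier_mat n n" and Ai: "Ai \<in> carrier_mat n n" and inv: "A * Ai = 1\<^sub>m n"
  shows "(Ai * transpose_mat Ai) * gram A = 1\<^sub>m n" "gram A * (Ai * transpose_mat Ai) = 1\<^sub>m n"
proof -
  have inv': "Ai * A = 1\<^sub>m n" using mat_mult_left_right_inverse[OF A Ai inv] .
  have "transpose_mat Ai * transpose_mat A = transpose_mat (A * Ai)"
    "transpose_mat A * transpose_mat Ai = transpose_mat (Ai * A)"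
    using transpose_mult[OF A Ai] transpose_mult[OF Ai A] by simp_all
  then have tinv: "transpose_mat Ai * transpose_mat A = 1\<^sub>m n" "transpose_mat A * transpose_mat Ai = 1\<^sub>m n"
    using inv inv' by simp_all
  have "(Ai * transpose_mat Ai) * gram A = Ai * (transpose_mat Ai * transpose_mat A) * A"
    using A Ai by (simp add: assoc_mult_mat[of _ n n _ n _ n])
  then show "(Ai * transpose_mat Ai) * gram A = 1\<^sub>m n" using tinv inv' Ai by simp
  have "gram A * (Ai * transpose_mat Ai) = transpose_mat A * (A * Ai) * transpose_mat Ai"
    using A Ai by (simp add: assoc_mult_mat[of _ n n _ n _ n])
  then show "gram A * (Ai * transpose_mat Ai) = 1\<^sub>m n" using tinv inv A by simp
qed

lemma gram_eq_sandwich: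
  fixes X B Bi :: "'a::comm_ring_1 mat"
  assumes X: "X \<in> carrier_mat n w" and B: "B \<in> carrier_mat n n" and Bi: "Bi \<in> carrier_mat n n"
    and inv: "B * Bi = 1\<^sub>m n"
  shows "gram X = transpose_mat (transpose_mat B * X) * (Bi * transpose_mat Bi) * (transpose_mat B * X)"
proof -
  let ?U = "transpose_mat B * X"
  have "transpose_mat Bi * transpose_mat B = 1\<^sub>m n" using transpose_mult[OF B Bi] inv by simp
  then have X_eq: "X = transpose_mat Bi * ?U"
    using B Bi X by (simp add: assoc_mult_mat[of _ n n _ n _ w, symmetric])
  have U: "?U \<in> carrier_mat n w" using B X by simp
  have "gram X = (transpose_mat ?U * Bi) * (transpose_mat Bi * ?U)"
    using arg_cong[OF X_eq, of gram] transpose_mult[of "transpose_mat Bi" n n ?U w] Bi U by simp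
  also have "\<dots> = transpose_mat ?U * (Bi * transpose_mat Bi) * ?U"
    using U Bi by (simp add: assoc_mult_mat[of _ w n _ n _ w] assoc_mult_mat[of _ n n _ n _ w])
  finally show ?thesis .
qed

lemma gram_mult:
  fixes C X :: "'a::comm_ring_1 mat"
  assumes "C \<in> carrier_mat n n" "X \<in> carrier_mat n w"
  shows "gram (C * X) = transpose_mat X * gram C * X"
  using assms transpose_mult[OF assms]
  by (simp add: assoc_mult_mat[of _ w n _ n _ w] assoc_mult_mat[of _ n n _ n _ w])

lemma transpose_mult_change_basis:
  fixes C Ci X Y :: "'a::comm_ring_1 mat"
  assumes "C \<in> carrier_mat n n" "Ci \<in> carrier_mat n n" "X \<in> carrier_mat n w" "Y \<in> carrier_mat n v"
    and "Ci * C = 1\<^sub>m n"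
  shows "transpose_mat (C * X) * (transpose_mat Ci * Y) = transpose_mat X * Y"
proof -
  have "transpose_mat C * transpose_mat Ci = 1\<^sub>m n" using transpose_mult[of Ci n n C n] assms by simp
  then have "transpose_mat C * (transpose_mat Ci * Y) = Y"
    using assms assoc_mult_mat[of "transpose_mat C" n n "transpose_mat Ci" n Y v] by simp
  then show ?thesis using assms transpose_mult[of C n n X w]
    by (simp add: assoc_mult_mat[of _ w n _ n _ v])
qed

lemma gram_mult_right:
  fixes X S :: "'a::comm_ring_1 mat"
  assumes X: "X \<in> carrier_mat n w" and S: "S \<in> carrier_mat w k"
  shows "gram (X * S) = transpose_mat S * gram X * S"
proof -
  have "gram (X * S) = (transpose_mat S * transpose_mat X) * (X * S)"
    using transpose_mult[OF X S] by simp
  also have "\<dots> = transpose_mat S * gram X * S"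
    using X S by (simp add: assoc_mult_mat[of _ k w _ n _ k] assoc_mult_mat[of _ w n _ w _ k]
        assoc_mult_mat[of _ k w _ w _ k])
  finally show ?thesis .
qed

lemma sandwich_id_plus:
  fixes X E :: "'a::comm_ring_1 mat"
  assumes X: "X \<in> carrier_mat n w" and E: "E \<in> carrier_mat n n"
  shows "transpose_mat X * (1\<^sub>m n + t \<cdot>\<^sub>m E) * X = gram X + t \<cdot>\<^sub>m (transpose_mat X * E * X)"
proof -
  have tX: "transpose_mat X \<in> carrier_mat w n" using X by simp
  have "transpose_mat X * (1\<^sub>m n + t \<cdot>\<^sub>m E) = transpose_mat X + t \<cdot>\<^sub>m (transpose_mat X * E)"
    using mult_add_distrib_mat[OF tX one_carrier_mat smult_carrier_mat[OF E]] mult_smult_distrib[OF tX E] tX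
    by simp
  then show ?thesis
    using add_mult_distrib_mat[OF tX smult_carrier_mat[OF mult_carrier_mat[OF tX E]] X]
      mult_smult_assoc_mat[OF mult_carrier_mat[OF tX E] X] by simp
qed

lemma sandwich_sandwich:
  fixes X B F :: "'a::comm_ring_1 mat"
  assumes X: "X \<in> carrier_mat n w" and B: "B \<in> carrier_mat n k" and F: "F \<in> carrier_mat k k"
  shows "transpose_mat X * (B * F * transpose_mat B) * X
    = transpose_mat (transpose_mat B * X) * F * (transpose_mat B * X)"
proof -
  have tX: "transpose_mat X \<in> carrier_mat w n" and tB: "transpose_mat B \<in> carrier_mat k n"
    and BF: "B * F \<in> carrier_mat n k" using X B F by simp_all
  have "transpose_mat X * (B * F * transpose_mat B) * X = transpose_mat X * (B * F) * (transpose_mat B * X)"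
    using assoc_mult_mat[OF tX mult_carrier_mat[OF BF tB] X] assoc_mult_mat[OF BF tB X]
      assoc_mult_mat[OF tX BF mult_carrier_mat[OF tB X]] by simp
  also have "transpose_mat X * (B * F) = transpose_mat (transpose_mat B * X) * F"
    using assoc_mult_mat[OF tX B F] transpose_mult[OF tB X] by simp
  finally show ?thesis .
qed

section \<open>Positive definite perturbations of the identity\<close>

definition sym_fun :: "nat \<Rightarrow> (nat \<Rightarrow> nat \<Rightarrow> real) \<Rightarrow> bool" where
  "sym_fun n K \<longleftrightarrow> (\<forall>i<n. \<forall>j<n. K i j = K j i)"

definition quad_form :: "nat \<Rightarrow> (nat \<Rightarrow> nat \<Rightarrow> real) \<Rightarrow> (nat \<Rightarrow> real) \<Rightarrow> real" where
  "quad_form n K v = (\<Sum>i<n. \<Sum>j<n. v i * K i j * v j)"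

definition pos_def_fun :: "nat \<Rightarrow> (nat \<Rightarrow> nat \<Rightarrow> real) \<Rightarrow> bool" where
  "pos_def_fun n K \<longleftrightarrow> (\<forall>v. (\<exists>i<n. v i \<noteq> 0) \<longrightarrow> 0 < quad_form n K v)"

lemma pos_def_fun_cong:
  assumes "\<And>i j. i < n \<Longrightarrow> j < n \<Longrightarrow> K i j = K' i j"
  shows "pos_def_fun n K \<longleftrightarrow> pos_def_fun n K'"
proof -
  have "quad_form n K = quad_form n K'"
    unfolding quad_form_def using assms by (intro ext sum.cong) auto
  then show ?thesis unfolding pos_def_fun_def by simp
qed

lemma quad_form_Suc:
  "quad_form (Suc m) K v = quad_form m K v + (\<Sum>i<m. v i * K i m) * v m
     + v m * (\<Sum>j<m. K m j * v j) + v m * K m m * v m"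
proof -
  have "quad_form (Suc m) K v = (\<Sum>i<m. (\<Sum>j<m. v i * K i j * v j) + v i * K i m * v m)
      + ((\<Sum>j<m. v m * K m j * v j) + v m * K m m * v m)"
    unfolding quad_form_def by simp
  also have "\<dots> = quad_form m K v + (\<Sum>i<m. v i * K i m) * v m
      + v m * (\<Sum>j<m. K m j * v j) + v m * K m m * v m"
    unfolding quad_form_def by (simp add: sum.distrib sum_distrib_left sum_distrib_right mult.assoc)
  finally show ?thesis .
qed

lemma pos_def_fun_Schur_complement:
  assumes sym: "sym_fun (Suc m) K" and pd: "pos_def_fun (Suc m) K"
  shows "0 < K m m" "sym_fun m (\<lambda>i j. K i j - K i m * K m j / K m m)"
    "pos_def_fun m (\<lambda>i j. K i j - K i m * K m j / K m m)"
proof -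
  have "0 < quad_form (Suc m) K (\<lambda>i. if i = m then 1 else 0)"
    by (rule pd[unfolded pos_def_fun_def, rule_format]) auto
  then show pos: "0 < K m m" unfolding quad_form_Suc by (simp add: quad_form_def)
  show "sym_fun m (\<lambda>i j. K i j - K i m * K m j / K m m)"
    using sym unfolding sym_fun_def by (simp add: mult.commute)
  show "pos_def_fun m (\<lambda>i j. K i j - K i m * K m j / K m m)"
    unfolding pos_def_fun_def
  proof (intro allI impI)
    fix v :: "nat \<Rightarrow> real" assume "\<exists>i<m. v i \<noteq> 0"
    define s where "s = (\<Sum>j<m. K m j * v j)"
    \<comment> \<open>extend \<open>v\<close> by the last coordinate that minimises the quadratic form\<close>
    define w where "w = (\<lambda>i. if i < m then v i else if i = m then - s / K m m else 0)"
    have "\<exists>i<Suc m. w i \<noteq> 0" using \<open>\<exists>i<m. v i \<noteq> 0\<close> unfolding w_def by auto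
    then have "0 < quad_form (Suc m) K w" using pd unfolding pos_def_fun_def by blast
    moreover have "quad_form m K w = quad_form m K v"
      unfolding quad_form_def w_def by (intro sum.cong) auto
    moreover have "(\<Sum>i<m. w i * K i m) = s" "(\<Sum>j<m. K m j * w j) = s"
      "(\<Sum>i<m. v i * K i m) = s"
      unfolding s_def w_def using sym unfolding sym_fun_def by (auto intro!: sum.cong simp: mult.commute)
    ultimately have "0 < quad_form m K v - s * s / K m m"
      unfolding quad_form_Suc using pos by (simp add: w_def field_simps)
    also have "quad_form m K v - s * s / K m m
        = quad_form m K v - (\<Sum>i<m. \<Sum>j<m. (v i * K i m) * (K m j * v j)) / K m m"
      unfolding sum_product[symmetric] \<open>(\<Sum>i<m. v i * K i m) = s\<close> s_def ..
    also have "\<dots> = quad_form m (\<lambda>i j. K i j - K i m * K m j / K m m) v"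
      unfolding quad_form_def
      by (simp add: sum_subtractf sum_divide_distrib right_diff_distrib left_diff_distrib mult_ac)
    finally show "0 < quad_form m (\<lambda>i j. K i j - K i m * K m j / K m m) v" .
  qed
qed

lemma pos_def_fun_factor:
  assumes "sym_fun n K" "pos_def_fun n K"
  shows "\<exists>L. \<forall>i<n. \<forall>j<n. K i j = (\<Sum>k<n. L k i * L k j)"
  using assms
proof (induct n arbitrary: K)
  case (Suc m K)
  define K' where "K' = (\<lambda>i j. K i j - K i m * K m j / K m m)"
  note Schur = pos_def_fun_Schur_complement[OF Suc(2,3), folded K'_def]
  obtain L' where L': "\<forall>i<m. \<forall>j<m. K' i j = (\<Sum>k<m. L' k i * L' k j)"
    using Suc(1)[OF Schur(2,3)] by blast
  define L where "L = (\<lambda>k i. if k < m then (if i < m then L' k i else 0) else K m i / sqrt (K m m))"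
  have sym: "K i m = K m i" if "i < Suc m" for i
    using Suc(2) that unfolding sym_fun_def by auto
  have "K i j = (\<Sum>k<Suc m. L k i * L k j)" if "i < Suc m" "j < Suc m" for i j
  proof -
    have "(\<Sum>k<Suc m. L k i * L k j) = (if i < m \<and> j < m then K' i j else 0) + K m i * K m j / K m m"
      using L' Schur(1) unfolding L_def by (auto intro: sum.neutral simp: real_sqrt_mult[symmetric])
    then show ?thesis
      using that sym[OF that(1)] sym[OF that(2)] Schur(1) unfolding K'_def
      by (cases "i < m \<and> j < m") (auto simp: less_Suc_eq mult.commute)
  qed
  then show ?case by blast
qed simp

lemma abs_mult_le_sum_squares:
  fixes v :: "nat \<Rightarrow> real"
  assumes "i < n" "j < n"
  shows "\<bar>v i\<bar> * \<bar>v j\<bar> \<le> (\<Sum>k<n. v k * v k)"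
proof -
  have "\<bar>v i\<bar> * \<bar>v j\<bar> \<le> (v i * v i + v j * v j) / 2"
    using sum_squares_bound[of "\<bar>v i\<bar>" "\<bar>v j\<bar>"] by (simp add: power2_eq_square abs_mult_self_eq)
  also have "\<dots> \<le> (\<Sum>k<n. v k * v k)"
    using member_le_sum[of i "{..<n}" "\<lambda>k. v k * v k"] member_le_sum[of j "{..<n}" "\<lambda>k. v k * v k"] assms
    by simp
  finally show ?thesis .
qed

lemma abs_quad_form_le:
  "\<bar>quad_form n E v\<bar> \<le> (\<Sum>i<n. \<Sum>j<n. \<bar>E i j\<bar>) * (\<Sum>k<n. v k * v k)"
proof -
  have "\<bar>quad_form n E v\<bar> \<le> (\<Sum>i<n. \<Sum>j<n. \<bar>v i * E i j * v j\<bar>)"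
    unfolding quad_form_def by (rule order.trans[OF sum_abs], rule sum_mono, rule sum_abs)
  also have "\<dots> \<le> (\<Sum>i<n. \<Sum>j<n. \<bar>E i j\<bar> * (\<Sum>k<n. v k * v k))"
  proof (intro sum_mono)
    fix i j assume "i \<in> {..<n}" "j \<in> {..<n}"
    then have "\<bar>E i j\<bar> * (\<bar>v i\<bar> * \<bar>v j\<bar>) \<le> \<bar>E i j\<bar> * (\<Sum>k<n. v k * v k)"
      using abs_mult_le_sum_squares by (intro mult_left_mono) auto
    then show "\<bar>v i * E i j * v j\<bar> \<le> \<bar>E i j\<bar> * (\<Sum>k<n. v k * v k)"
      by (simp add: abs_mult algebra_simps)
  qed
  finally show ?thesis by (simp add: sum_distrib_right)
qed

lemma pos_def_fun_id_plus:
  fixes E :: "nat \<Rightarrow> nat \<Rightarrow> real" and n :: nat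
  defines "M \<equiv> \<Sum>i<n. \<Sum>j<n. \<bar>E i j\<bar>"
  shows "pos_def_fun n (\<lambda>i j. (if i = j then 1 else 0) + E i j / (1 + M))"
  unfolding pos_def_fun_def
proof (intro allI impI)
  fix v :: "nat \<Rightarrow> real" assume "\<exists>i<n. v i \<noteq> 0"
  then obtain i where i: "i < n" "v i \<noteq> 0" by blast
  define S where "S = (\<Sum>k<n. v k * v k)"
  have M: "0 \<le> M" unfolding M_def by (intro sum_nonneg) auto
  have "0 < v i * v i" using i(2) not_real_square_gt_zero by blast
  also have "\<dots> \<le> S" unfolding S_def using member_le_sum[of i "{..<n}" "\<lambda>k. v k * v k"] i(1) by simp
  finally have S: "0 < S" .
  define Q where "Q = quad_form n E v"
  have "quad_form n (\<lambda>i j. (if i = j then 1 else 0) + E i j / (1 + M)) v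
      = (\<Sum>i<n. \<Sum>j<n. (if i = j then v i * v j else 0) + v i * E i j * v j / (1 + M))"
    unfolding quad_form_def by (intro sum.cong) (auto simp: algebra_simps)
  also have "\<dots> = S + Q / (1 + M)"
    unfolding S_def Q_def quad_form_def by (simp add: sum.distrib sum_divide_distrib)
  finally have form: "quad_form n (\<lambda>i j. (if i = j then 1 else 0) + E i j / (1 + M)) v = S + Q / (1 + M)" .
  have "\<bar>Q\<bar> / (1 + M) \<le> M * S / (1 + M)"
    using abs_quad_form_le[of n E v] M unfolding M_def[symmetric] S_def[symmetric] Q_def
    by (intro divide_right_mono) auto
  also have "\<dots> < S" using M S by (simp add: field_simps)
  finally have "\<bar>Q\<bar> / (1 + M) < S" .
  moreover have "- \<bar>Q\<bar> / (1 + M) \<le> Q / (1 + M)" using M by (intro divide_right_mono) auto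
  ultimately show "0 < quad_form n (\<lambda>i j. (if i = j then 1 else 0) + E i j / (1 + M)) v"
    unfolding form by simp
qed

lemma scalar_prod_mult_mat_vec_quad_form:
  assumes "K \<in> carrier_mat n n" "v \<in> carrier_vec n"
  shows "v \<bullet> (K *\<^sub>v v) = quad_form n (\<lambda>i j. K $$ (i, j)) (\<lambda>i. v $ i)"
  unfolding quad_form_def scalar_prod_def using assms
  by (auto simp: scalar_prod_def sum_distrib_left mult_ac lessThan_atLeast0 intro!: sum.cong)

lemma det_nonzero_if_pos_def_fun:
  assumes K: "K \<in> carrier_mat n n" and pd: "pos_def_fun n (\<lambda>i j. K $$ (i, j))"
  shows "det K \<noteq> 0"
proof
  assume "det K = 0"
  then obtain v where v: "v \<in> carrier_vec n" "v \<noteq> 0\<^sub>v n" "K *\<^sub>v v = 0\<^sub>v n"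
    using det_0_iff_vec_prod_zero_field[OF K] by blast
  have "\<exists>i<n. v $ i \<noteq> 0" using v(1,2) by (metis eq_vecI carrier_vecD index_zero_vec)
  then have "0 < quad_form n (\<lambda>i j. K $$ (i, j)) (\<lambda>i. v $ i)"
    using pd unfolding pos_def_fun_def by blast
  then show False using scalar_prod_mult_mat_vec_quad_form[OF K v(1)] v by simp
qed

lemma exists_invertible_factor_id_plus:
  fixes E :: "real mat"
  assumes E: "E \<in> carrier_mat n n" and sym: "transpose_mat E = E"
  obtains t C Ci where "0 < t" "C \<in> carrier_mat n n" "Ci \<in> carrier_mat n n"
    "gram C = 1\<^sub>m n + t \<cdot>\<^sub>m E" "Ci * C = 1\<^sub>m n"
proof -
  define M where "M = (\<Sum>i<n. \<Sum>j<n. \<bar>E $$ (i, j)\<bar>)"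
  define t where "t = 1 / (1 + M)"
  have t: "0 < t" unfolding t_def M_def by (simp add: add_pos_nonneg sum_nonneg)
  define K where "K = 1\<^sub>m n + t \<cdot>\<^sub>m E"
  have Kc: "K \<in> carrier_mat n n" unfolding K_def using E by simp
  have K: "K $$ (i, j) = (if i = j then 1 else 0) + E $$ (i, j) / (1 + M)" if "i < n" "j < n" for i j
    using that E unfolding K_def t_def by simp
  have "pos_def_fun n (\<lambda>i j. K $$ (i, j)) \<longleftrightarrow>
      pos_def_fun n (\<lambda>i j. (if i = j then 1 else 0) + E $$ (i, j) / (1 + M))"
    by (rule pos_def_fun_cong) (simp add: K)
  then have pd: "pos_def_fun n (\<lambda>i j. K $$ (i, j))"
    using pos_def_fun_id_plus[of n "\<lambda>i j. E $$ (i, j)"] unfolding M_def by simp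
  have "E $$ (i, j) = E $$ (j, i)" if "i < n" "j < n" for i j
    using sym E that by (metis carrier_matD index_transpose_mat(1))
  then have "sym_fun n (\<lambda>i j. K $$ (i, j))" using K unfolding sym_fun_def by simp
  then obtain L where L: "\<forall>i<n. \<forall>j<n. K $$ (i, j) = (\<Sum>k<n. L k i * L k j)"
    using pos_def_fun_factor pd by blast
  define C where "C = mat n n (\<lambda>(k, i). L k i)"
  have Cc: "C \<in> carrier_mat n n" unfolding C_def by simp
  have CC: "gram C = K"
    using L Kc unfolding C_def
    by (intro eq_matI) (auto simp: scalar_prod_def lessThan_atLeast0 intro!: sum.cong)
  have "det (transpose_mat C) * det C \<noteq> 0"
    using det_nonzero_if_pos_def_fun[OF Kc pd] det_mult[of "transpose_mat C" n C] Cc CC by simp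
  then obtain Ci where "Ci \<in> carrier_mat n n" "Ci * C = 1\<^sub>m n"
    using det_nonzero_imp_inverse[OF Cc] by auto
  then show ?thesis using that t Cc CC unfolding K_def by blast
qed

section \<open>Factorisations compatible with the a priori knowledge\<close>

definition compatible_pair ::
  "nat \<Rightarrow> nat \<Rightarrow> nat \<Rightarrow> real mat \<Rightarrow> sharp \<Rightarrow> nat \<Rightarrow> (nat \<Rightarrow> nat \<times> nat) \<Rightarrow> (nat \<Rightarrow> real)
   \<Rightarrow> real mat \<Rightarrow> real mat \<Rightarrow> bool" where
  "compatible_pair D W VK Dm s J \<theta> c Pst Pm \<longleftrightarrow>
     Pst \<in> carrier_mat D W \<and> Pm \<in> carrier_mat D VK \<and> transpose_mat Pst * Pm = Dm \<and>
     (\<forall>j<J. (if s = St then gram Pst else gram Pm) $$ \<theta> j = c j)"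

definition factor_grams_unique ::
  "nat \<Rightarrow> nat \<Rightarrow> nat \<Rightarrow> real mat \<Rightarrow> sharp \<Rightarrow> nat \<Rightarrow> (nat \<Rightarrow> nat \<times> nat) \<Rightarrow> (nat \<Rightarrow> real) \<Rightarrow> bool" where
  "factor_grams_unique D W VK Dm s J \<theta> c \<longleftrightarrow>
     (\<forall>X Y X' Y'. compatible_pair D W VK Dm s J \<theta> c X Y \<longrightarrow> compatible_pair D W VK Dm s J \<theta> c X' Y' \<longrightarrow>
        gram X = gram X' \<and> gram Y = gram Y')"

locale st_knowledge =
  fixes D W VK :: nat and Dm :: "real mat" and J :: nat and \<theta> :: "nat \<Rightarrow> nat \<times> nat"
    and c :: "nat \<Rightarrow> real"
  assumes Dm: "Dm \<in> carrier_mat W VK" and DW: "D \<le> W" and DV: "D \<le> VK"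
    and det_topleft: "det (topleft D Dm) \<noteq> 0"
    and \<theta>: "\<And>j. j < J \<Longrightarrow> fst (\<theta> j) < W \<and> snd (\<theta> j) < W"
begin

abbreviation "pair \<equiv> compatible_pair D W VK Dm St J \<theta> c"
abbreviation "S \<equiv> incl_mat W D"
abbreviation "S' \<equiv> incl_mat VK D"
abbreviation "T \<equiv> topleft D Dm"

text \<open>\<open>U\<close> is the transpose of the first \<open>D\<close> columns of \<open>Dm\<close>, \<open>V\<close> its first \<open>D\<close> rows.\<close>

definition U :: "real mat" where "U = transpose_mat S' * transpose_mat Dm"
definition V :: "real mat" where "V = transpose_mat S * Dm"

lemma U_carrier [simp]: "U \<in> carrier_mat D W"
  unfolding U_def using mult_carrier_mat[of "transpose_mat S'" D VK "transpose_mat Dm" W] Dm by simp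

lemma dim_U [simp]: "dim_row U = D" "dim_col U = W"
  using U_carrier by (auto simp del: U_carrier)

lemma T_carrier [simp]: "T \<in> carrier_mat D D"
  unfolding topleft_def by simp

lemma U_index: "i < D \<Longrightarrow> a < W \<Longrightarrow> U $$ (i, a) = Dm $$ (a, i)"
  unfolding U_def using transpose_incl_mat_mult[of "transpose_mat Dm" VK W D] Dm DV by simp

lemma U_mult_S: "U * S = transpose_mat T"
  using mult_incl_mat[OF U_carrier DW] DW DV by (auto intro!: eq_matI simp: U_index topleft_def)

lemma sandwich_index:
  assumes F: "F \<in> carrier_mat D D" and ab: "a < W" "b < W"
  shows "(transpose_mat U * F * U) $$ (a, b) = row_form D Dm F (a, b)"
proof -
  have dF: "dim_row F = D" "dim_col F = D" using F by auto
  have "(transpose_mat U * F * U) $$ (a, b) = (\<Sum>l\<in>{0..<D}. (transpose_mat U * F) $$ (a, l) * U $$ (l, b))"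
    using ab dF by (simp add: scalar_prod_def)
  also have "\<dots> = (\<Sum>l<D. (\<Sum>i<D. U $$ (i, a) * F $$ (i, l)) * U $$ (l, b))"
    using ab dF by (auto simp: scalar_prod_def lessThan_atLeast0 intro!: sum.cong)
  also have "\<dots> = (\<Sum>l<D. \<Sum>i<D. Dm $$ (a, i) * F $$ (i, l) * Dm $$ (b, l))"
    using ab by (auto simp: U_index sum_distrib_right intro!: sum.cong)
  also have "\<dots> = row_form D Dm F (a, b)" unfolding row_form_def by (simp only: prod.case, rule sum.swap)
  finally show ?thesis .
qed

lemma sandwich_eq_zero_imp_zero:
  assumes F: "F \<in> carrier_mat D D" and zero: "transpose_mat U * F * U = 0\<^sub>m W W"
  shows "F = 0\<^sub>m D D"
proof -
  have "transpose_mat S * (transpose_mat U * F * U) * S = T * F * transpose_mat T"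
    using sandwich_sandwich[OF incl_mat_carrier _ F, of "transpose_mat U"] U_mult_S by simp
  then have TFT: "T * F * transpose_mat T = 0\<^sub>m D D"
    unfolding zero by (simp add: right_mult_zero_mat[of _ D W W] left_mult_zero_mat[of _ W D])
  obtain Ti where Ti: "Ti \<in> carrier_mat D D" "Ti * T = 1\<^sub>m D"
    using det_nonzero_imp_inverse[OF T_carrier det_topleft] by blast
  have "transpose_mat T * transpose_mat Ti = 1\<^sub>m D"
    using transpose_mult[OF Ti(1) T_carrier] Ti(2) by simp
  then have "F = Ti * (T * F * transpose_mat T) * transpose_mat Ti"
    using sandwich_sandwich[of "transpose_mat Ti" D D T D F] Ti F by simp
  then show ?thesis unfolding TFT using Ti(1) by simp
qed

lemma pair_blocks:
  assumes "pair X Y"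
  shows "X * S \<in> carrier_mat D D" "Y * S' \<in> carrier_mat D D"
    "det (X * S) \<noteq> 0" "det (Y * S') \<noteq> 0"
    "transpose_mat (Y * S') * X = U" "transpose_mat (X * S) * Y = V"
proof -
  have X: "X \<in> carrier_mat D W" and Y: "Y \<in> carrier_mat D VK" and XY: "transpose_mat X * Y = Dm"
    using assms unfolding compatible_pair_def by auto
  have tX: "transpose_mat X \<in> carrier_mat W D" and tY: "transpose_mat Y \<in> carrier_mat VK D"
    and tS: "transpose_mat S \<in> carrier_mat D W" and tS': "transpose_mat S' \<in> carrier_mat D VK"
    using X Y by simp_all
  show XS: "X * S \<in> carrier_mat D D" and YS: "Y * S' \<in> carrier_mat D D" using X Y by simp_all
  have "transpose_mat (X * S) * (Y * S') = transpose_mat S * (transpose_mat X * Y) * S'"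
    using transpose_mult[OF X incl_mat_carrier] tS tX Y
    by (simp add: assoc_mult_mat[of _ D W _ D _ D] assoc_mult_mat[of _ W D _ VK _ D]
        assoc_mult_mat[of _ D W _ VK _ D])
  then have "transpose_mat (X * S) * (Y * S') = T"
    unfolding XY using topleft_eq_incl_mat[OF Dm DW DV] by simp
  then have "det (X * S) * det (Y * S') \<noteq> 0"
    using det_mult[of "transpose_mat (X * S)" D "Y * S'"] det_transpose[OF XS] XS YS det_topleft by simp
  then show "det (X * S) \<noteq> 0" "det (Y * S') \<noteq> 0" by auto
  have "transpose_mat Y * X = transpose_mat Dm"
    using transpose_mult[OF tX Y] XY by simp
  then show "transpose_mat (Y * S') * X = U"
    using transpose_mult[OF Y incl_mat_carrier] assoc_mult_mat[OF tS' tY X] unfolding U_def by simp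
  show "transpose_mat (X * S) * Y = V"
    using transpose_mult[OF X incl_mat_carrier] assoc_mult_mat[OF tS tX Y] XY unfolding V_def by simp
qed

lemma gram_fst_sandwich:
  assumes "pair X Y"
  obtains K where "K \<in> carrier_mat D D" "transpose_mat K = K" "gram X = transpose_mat U * K * U"
proof -
  note B = pair_blocks[OF assms]
  have X: "X \<in> carrier_mat D W" using assms unfolding compatible_pair_def by auto
  obtain Bi where Bi: "Bi \<in> carrier_mat D D" "(Y * S') * Bi = 1\<^sub>m D"
    using det_nonzero_imp_inverse[OF B(2,4)] by blast
  have "transpose_mat (Bi * transpose_mat Bi) = Bi * transpose_mat Bi"
    using transpose_mult[OF Bi(1), of "transpose_mat Bi" D] Bi(1) by simp
  then show ?thesis
    using that[of "Bi * transpose_mat Bi"] gram_eq_sandwich[OF X B(2) Bi] Bi(1) B(5) by simp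
qed

lemma gram_snd_sandwich:
  assumes "pair X Y"
  obtains K where "K \<in> carrier_mat D D" "K * gram (X * S) = 1\<^sub>m D" "gram (X * S) * K = 1\<^sub>m D"
    "gram Y = transpose_mat V * K * V"
proof -
  note B = pair_blocks[OF assms]
  have Y: "Y \<in> carrier_mat D VK" using assms unfolding compatible_pair_def by auto
  obtain Ai where Ai: "Ai \<in> carrier_mat D D" "(X * S) * Ai = 1\<^sub>m D"
    using det_nonzero_imp_inverse[OF B(1,3)] by blast
  show ?thesis
    using that[of "Ai * transpose_mat Ai"] inverse_gram[OF B(1) Ai] gram_eq_sandwich[OF Y B(1) Ai] Ai(1) B(6)
    by simp
qed

lemma gram_fst_unique:
  assumes triv: "sym_annihilator_trivial D Dm J \<theta>" and P: "pair X Y" and P': "pair X' Y'"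
  shows "gram X = gram X'"
proof -
  obtain K where K: "K \<in> carrier_mat D D" "transpose_mat K = K" "gram X = transpose_mat U * K * U"
    using gram_fst_sandwich[OF P] .
  obtain K' where K': "K' \<in> carrier_mat D D" "transpose_mat K' = K'" "gram X' = transpose_mat U * K' * U"
    using gram_fst_sandwich[OF P'] .
  have tU: "transpose_mat U \<in> carrier_mat W D" by simp
  have KK: "K - K' \<in> carrier_mat D D" using minus_carrier_mat[OF K'(1)] by simp
  have diff: "transpose_mat U * (K - K') * U = gram X - gram X'"
    unfolding K(3) K'(3) using mult_minus_distrib_mat[OF tU K(1) K'(1)]
      minus_mult_distrib_mat[of "transpose_mat U * K" W D "transpose_mat U * K'" U W] tU K(1) K'(1) by simp
  have "row_form D Dm (K - K') (\<theta> j) = 0" if j: "j < J" for j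
  proof -
    obtain a b where ab: "\<theta> j = (a, b)" "a < W" "b < W" using \<theta>[OF j] by (cases "\<theta> j") auto
    have "row_form D Dm (K - K') (\<theta> j) = (gram X - gram X') $$ (a, b)"
      using sandwich_index[OF KK ab(2,3)] ab(1) unfolding diff by simp
    also have "\<dots> = gram X $$ \<theta> j - gram X' $$ \<theta> j"
      using P P' ab unfolding compatible_pair_def by auto
    also have "\<dots> = 0" using P P' j unfolding compatible_pair_def by simp
    finally show ?thesis .
  qed
  moreover have "transpose_mat (K - K') = K - K'" using transpose_minus[OF K(1) K'(1)] K K' by simp
  ultimately have "K - K' = 0\<^sub>m D D" using triv KK unfolding sym_annihilator_trivial_def by blast
  then have "K = K'"
  proof (intro eq_matI)
    fix i l assume zero: "K - K' = 0\<^sub>m D D" and il: "i < dim_row K'" "l < dim_col K'"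
    have "(K - K') $$ (i, l) = 0" unfolding zero using il K'(1) by simp
    then show "K $$ (i, l) = K' $$ (i, l)" using il K'(1) by simp
  qed (use K(1) K'(1) in auto)
  then show ?thesis using K(3) K'(3) by simp
qed

lemma gram_snd_unique:
  assumes P: "pair X Y" and P': "pair X' Y'" and eq: "gram X = gram X'"
  shows "gram Y = gram Y'"
proof -
  have X: "X \<in> carrier_mat D W" "X' \<in> carrier_mat D W"
    using P P' unfolding compatible_pair_def by auto
  have "gram (X * S) = gram (X' * S)"
    using gram_mult_right[OF X(1) incl_mat_carrier] gram_mult_right[OF X(2) incl_mat_carrier] eq by simp
  moreover obtain K where K: "K \<in> carrier_mat D D" "K * gram (X * S) = 1\<^sub>m D"
    "gram Y = transpose_mat V * K * V"
    using gram_snd_sandwich[OF P] by blast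
  moreover obtain K' where K': "K' \<in> carrier_mat D D" "gram (X' * S) * K' = 1\<^sub>m D"
    "gram Y' = transpose_mat V * K' * V"
    using gram_snd_sandwich[OF P'] by blast
  ultimately have "K = K'"
    using left_inverse_unique[of "gram (X' * S)" D K K'] pair_blocks(1)[OF P'] by simp
  then show ?thesis using K(3) K'(3) by simp
qed

text \<open>\<open>C\<close> is a Cholesky factor of \<open>1 + t B F B\<^sup>T\<close>, where \<open>B = Y S'\<close> is the leading block of
  \<open>Y\<close>; the companion change of \<open>Y\<close> is \<open>Ci\<^sup>T Y\<close>.\<close>

lemma change_of_basis_perturbing_gram:
  assumes P: "pair X Y" and F: "F \<in> carrier_mat D D" "transpose_mat F = F"
  obtains t C Ci where "0 < t" "C \<in> carrier_mat D D" "Ci \<in> carrier_mat D D" "Ci * C = 1\<^sub>m D"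
    "gram (C * X) = gram X + t \<cdot>\<^sub>m (transpose_mat U * F * U)"
proof -
  have X: "X \<in> carrier_mat D W" using P unfolding compatible_pair_def by auto
  define B where "B = Y * S'"
  have B: "B \<in> carrier_mat D D" "transpose_mat B * X = U"
    using pair_blocks(2,5)[OF P] unfolding B_def by auto
  define E where "E = B * F * transpose_mat B"
  have E: "E \<in> carrier_mat D D" unfolding E_def using B(1) F(1) by simp
  have "transpose_mat E = E"
    unfolding E_def using transpose_mult[of "B * F" D D "transpose_mat B" D] transpose_mult[OF B(1) F(1)]
      B(1) F by (simp add: assoc_mult_mat[of _ D D _ D _ D])
  then obtain t C Ci where t: "0 < t" and C: "C \<in> carrier_mat D D" "Ci \<in> carrier_mat D D"
    "gram C = 1\<^sub>m D + t \<cdot>\<^sub>m E" "Ci * C = 1\<^sub>m D"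
    using exists_invertible_factor_id_plus[OF E] by blast
  have "gram (C * X) = gram X + t \<cdot>\<^sub>m (transpose_mat U * F * U)"
    unfolding gram_mult[OF C(1) X] C(3) sandwich_id_plus[OF X E]
    using sandwich_sandwich[OF X B(1) F(1)] B(2) unfolding E_def by simp
  then show ?thesis using that t C by blast
qed

lemma exists_pair_other_gram:
  assumes nontriv: "\<not> sym_annihilator_trivial D Dm J \<theta>" and P: "pair X Y"
  obtains X' Y' where "pair X' Y'" "gram X' \<noteq> gram X"
proof -
  obtain F where F: "F \<in> carrier_mat D D" "transpose_mat F = F" "F \<noteq> 0\<^sub>m D D"
    and annihilated: "\<And>j. j < J \<Longrightarrow> row_form D Dm F (\<theta> j) = 0"
    using nontriv unfolding sym_annihilator_trivial_def by blast
  have X: "X \<in> carrier_mat D W" and Y: "Y \<in> carrier_mat D VK" and XY: "transpose_mat X * Y = Dm"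
    using P unfolding compatible_pair_def by auto
  define G where "G = transpose_mat U * F * U"
  have G: "G \<in> carrier_mat W W"
    unfolding G_def using mult_carrier_mat[OF mult_carrier_mat[OF _ F(1)] U_carrier] by simp
  obtain t C Ci where t: "0 < t" and C: "C \<in> carrier_mat D D" "Ci \<in> carrier_mat D D" "Ci * C = 1\<^sub>m D"
    and gram': "gram (C * X) = gram X + t \<cdot>\<^sub>m G"
    using change_of_basis_perturbing_gram[OF P F(1,2)] unfolding G_def by blast
  have "gram (C * X) $$ \<theta> j = c j" if j: "j < J" for j
  proof -
    obtain a b where ab: "\<theta> j = (a, b)" "a < W" "b < W" using \<theta>[OF j] by (cases "\<theta> j") auto
    then have "G $$ \<theta> j = 0"
      using sandwich_index[OF F(1) ab(2,3)] annihilated[OF j] unfolding G_def by simp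
    moreover have "gram X $$ \<theta> j = c j" using P j unfolding compatible_pair_def by simp
    ultimately show ?thesis using ab G X unfolding gram' by simp
  qed
  then have "pair (C * X) (transpose_mat Ci * Y)"
    using C X Y XY transpose_mult_change_basis[OF C(1,2) X Y C(3)] unfolding compatible_pair_def by simp
  moreover have "gram (C * X) \<noteq> gram X"
  proof
    assume eq: "gram (C * X) = gram X"
    have "G = 0\<^sub>m W W"
    proof (rule eq_matI)
      fix a b assume "a < dim_row (0\<^sub>m W W :: real mat)" "b < dim_col (0\<^sub>m W W :: real mat)"
      then have ab: "a < W" "b < W" by auto
      have "gram (C * X) $$ (a, b) = gram X $$ (a, b)" using eq by simp
      then show "G $$ (a, b) = 0\<^sub>m W W $$ (a, b)" using ab t G X unfolding gram' by simp
    qed (use G in auto)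
    then show False using sandwich_eq_zero_imp_zero[OF F(1)] F(3) unfolding G_def by blast
  qed
  ultimately show ?thesis using that by blast
qed

lemma factor_grams_unique_iff_rank:
  assumes "pair X\<^sub>0 Y\<^sub>0"
  shows "factor_grams_unique D W VK Dm St J \<theta> c \<longleftrightarrow> mrank (Mmat D Dm St J \<theta>) = D * (D + 1) div 2"
  unfolding rank_Mmat_St_iff factor_grams_unique_def
proof
  assume uniq: "\<forall>X Y X' Y'. pair X Y \<longrightarrow> pair X' Y' \<longrightarrow> gram X = gram X' \<and> gram Y = gram Y'"
  show "sym_annihilator_trivial D Dm J \<theta>"
  proof (rule ccontr)
    assume "\<not> sym_annihilator_trivial D Dm J \<theta>"
    then obtain X' Y' where "pair X' Y'" "gram X' \<noteq> gram X\<^sub>0"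
      using exists_pair_other_gram[OF _ assms] by blast
    then show False using uniq assms by blast
  qed
next
  assume triv: "sym_annihilator_trivial D Dm J \<theta>"
  show "\<forall>X Y X' Y'. pair X Y \<longrightarrow> pair X' Y' \<longrightarrow> gram X = gram X' \<and> gram Y = gram Y'"
    using gram_fst_unique[OF triv] gram_snd_unique by blast
qed

end

section \<open>Gram matrices of block factors\<close>

lemma hcat_carrier: "X \<in> carrier_mat D W \<Longrightarrow> Y \<in> carrier_mat D VK \<Longrightarrow> hcat X Y \<in> carrier_mat D (W + VK)"
  unfolding hcat_def by auto

lemma gram_index:
  assumes "X \<in> carrier_mat D W" "Y \<in> carrier_mat D VK" "p < W" "q < VK"
  shows "(transpose_mat X * Y) $$ (p, q) = (\<Sum>k<D. X $$ (k, p) * Y $$ (k, q))"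
  using assms by (auto simp: scalar_prod_def lessThan_atLeast0 intro!: sum.cong)

lemma gram_hcat_index:
  assumes X: "X \<in> carrier_mat D W" and Y: "Y \<in> carrier_mat D VK" and pq: "p < W + VK" "q < W + VK"
  shows "gram (hcat X Y) $$ (p, q) =
    (\<Sum>k<D. (if p < W then X $$ (k, p) else Y $$ (k, p - W)) * (if q < W then X $$ (k, q) else Y $$ (k, q - W)))"
  using hcat_carrier[OF X Y] pq X Y unfolding hcat_def
  by (auto simp: scalar_prod_def lessThan_atLeast0 intro!: sum.cong)

lemma gram_hcat_eq_iff:
  fixes X Y X' Y' :: "real mat"
  assumes X: "X \<in> carrier_mat D W" "X' \<in> carrier_mat D W" and Y: "Y \<in> carrier_mat D VK" "Y' \<in> carrier_mat D VK"
    and XY: "transpose_mat X * Y = transpose_mat X' * Y'"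
  shows "gram (hcat X Y) = gram (hcat X' Y') \<longleftrightarrow> gram X = gram X' \<and> gram Y = gram Y'"
proof
  assume G: "gram (hcat X Y) = gram (hcat X' Y')"
  have "gram X $$ (p, q) = gram X' $$ (p, q)" if "p < W" "q < W" for p q
    using arg_cong[OF G, of "\<lambda>A. A $$ (p, q)"] that gram_index[OF X(1) X(1)] gram_index[OF X(2) X(2)]
      gram_hcat_index[OF X(1) Y(1)] gram_hcat_index[OF X(2) Y(2)] by simp
  moreover have "gram Y $$ (p, q) = gram Y' $$ (p, q)" if "p < VK" "q < VK" for p q
    using arg_cong[OF G, of "\<lambda>A. A $$ (p + W, q + W)"] that gram_index[OF Y(1) Y(1)] gram_index[OF Y(2) Y(2)]
      gram_hcat_index[OF X(1) Y(1)] gram_hcat_index[OF X(2) Y(2)] by simp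
  ultimately show "gram X = gram X' \<and> gram Y = gram Y'"
    using X Y by (auto intro!: eq_matI)
next
  assume H: "gram X = gram X' \<and> gram Y = gram Y'"
  have XX: "(\<Sum>k<D. X $$ (k, p) * X $$ (k, q)) = (\<Sum>k<D. X' $$ (k, p) * X' $$ (k, q))"
    if "p < W" "q < W" for p q
    using H gram_index[OF X(1) X(1) that] gram_index[OF X(2) X(2) that] by simp
  have YY: "(\<Sum>k<D. Y $$ (k, p) * Y $$ (k, q)) = (\<Sum>k<D. Y' $$ (k, p) * Y' $$ (k, q))"
    if "p < VK" "q < VK" for p q
    using H gram_index[OF Y(1) Y(1) that] gram_index[OF Y(2) Y(2) that] by simp
  have XY': "(\<Sum>k<D. X $$ (k, p) * Y $$ (k, q)) = (\<Sum>k<D. X' $$ (k, p) * Y' $$ (k, q))"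
    if "p < W" "q < VK" for p q
    using XY gram_index[OF X(1) Y(1) that] gram_index[OF X(2) Y(2) that] by simp
  have YX: "(\<Sum>k<D. Y $$ (k, p) * X $$ (k, q)) = (\<Sum>k<D. Y' $$ (k, p) * X' $$ (k, q))"
    if "p < VK" "q < W" for p q
    using XY'[OF that(2,1)] by (simp add: mult.commute)
  show "gram (hcat X Y) = gram (hcat X' Y')"
  proof (rule eq_matI)
    fix p q assume "p < dim_row (gram (hcat X' Y'))" "q < dim_col (gram (hcat X' Y'))"
    then have pq: "p < W + VK" "q < W + VK" using hcat_carrier[OF X(2) Y(2)] by auto
    then show "gram (hcat X Y) $$ (p, q) = gram (hcat X' Y') $$ (p, q)"
      unfolding gram_hcat_index[OF X(1) Y(1) pq] gram_hcat_index[OF X(2) Y(2) pq]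
      using XX YY XY' YX by (cases "p < W"; cases "q < W") auto
  qed (use hcat_carrier[OF X(1) Y(1)] hcat_carrier[OF X(2) Y(2)] in auto)
qed

lemma (in vec_space) rank_gram_le:
  assumes P: "P \<in> carrier_mat d n"
  shows "rank (gram P) \<le> d"
proof -
  define G where "G = (\<lambda>m. mat n n (\<lambda>(p, q). \<Sum>k<m. P $$ (k, p) * P $$ (k, q)))"
  have "rank (G m) \<le> m" for m
  proof (induct m)
    case 0
    have "G 0 = 0\<^sub>m n n" unfolding G_def by (rule eq_matI) auto
    then show ?case using rank_0I by simp
  next
    case (Suc m)
    define R where "R = mat n n (\<lambda>(p, q). P $$ (m, p) * P $$ (m, q))"
    have R: "R \<in> carrier_mat n n" unfolding R_def by simp
    have "G (Suc m) = G m + R" unfolding G_def R_def by (rule eq_matI) auto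
    moreover have "rank R \<le> 1"
      by (rule rank_le_1_product_entries[OF R, of "\<lambda>p. P $$ (m, p)" "\<lambda>q. P $$ (m, q)"]) (auto simp: R_def)
    ultimately show ?case
      using rank_subadditive[of "G m" n R] R Suc unfolding G_def by simp
  qed
  moreover have "gram P = G d"
    unfolding G_def using P by (intro eq_matI) (auto simp: scalar_prod_def lessThan_atLeast0 intro!: sum.cong)
  ultimately show ?thesis by simp
qed

lemma pick_atLeastLessThan:
  assumes "k < D"
  shows "pick {a..<a + D} k = a + k"
proof -
  have "{x\<in>{a..<a + D}. x < a + k} = {a..<a + k}" using assms by auto
  then show ?thesis using pick_card_in_set[of "a + k" "{a..<a + D}"] assms by simp
qed

lemma rank_gram_hcat:
  fixes X Y Dm :: "real mat"
  assumes X: "X \<in> carrier_mat D W" and Y: "Y \<in> carrier_mat D VK" and XY: "transpose_mat X * Y = Dm"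
    and DW: "D \<le> W" and DV: "D \<le> VK" and det: "det (topleft D Dm) \<noteq> 0"
  shows "mrank (gram (hcat X Y)) = D"
proof -
  interpret V: vec_space "TYPE(real)" "W + VK" .
  have G: "gram (hcat X Y) \<in> carrier_mat (W + VK) (W + VK)" using hcat_carrier[OF X Y] by simp
  have rows: "{i. i < dim_row (gram (hcat X Y)) \<and> i \<in> {0..<0 + D}} = {0..<D}"
    and cols: "{j. j < dim_col (gram (hcat X Y)) \<and> j \<in> {W..<W + D}} = {W..<W + D}"
    using G DW DV by auto
  \<comment> \<open>the off-diagonal block \<open>X\<^sup>T Y = Dm\<close> of the Gram matrix contains \<open>topleft D Dm\<close> as a minor\<close>
  have "submatrix (gram (hcat X Y)) {0..<0 + D} {W..<W + D} = topleft D Dm"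
  proof (rule eq_matI)
    fix i l assume "i < dim_row (topleft D Dm)" "l < dim_col (topleft D Dm)"
    then have il: "i < D" "l < D" unfolding topleft_def by auto
    then have "submatrix (gram (hcat X Y)) {0..<0 + D} {W..<W + D} $$ (i, l) = gram (hcat X Y) $$ (i, W + l)"
      unfolding submatrix_def rows cols using pick_atLeastLessThan[OF il(1), of 0]
        pick_atLeastLessThan[OF il(2), of W] by simp
    also have "\<dots> = Dm $$ (i, l)"
      using gram_hcat_index[OF X Y, of i "W + l"] gram_index[OF X Y, of i l] il DW DV XY by simp
    finally show "submatrix (gram (hcat X Y)) {0..<0 + D} {W..<W + D} $$ (i, l) = topleft D Dm $$ (i, l)"
      unfolding topleft_def using il by simp
  qed (unfold dim_submatrix rows cols, auto simp: topleft_def)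
  then have "card {j. j < W + VK \<and> j \<in> {W..<W + D}} \<le> V.rank (gram (hcat X Y))"
    using V.rank_gt_minor[OF G] det by metis
  moreover have "{j. j < W + VK \<and> j \<in> {W..<W + D}} = {W..<W + D}" using DV by auto
  ultimately show ?thesis
    using V.rank_gram_le[OF hcat_carrier[OF X Y]] hcat_carrier[OF X Y] unfolding mrank_def by simp
qed

lemma compatible_iff_pair:
  "compatible D W VK Dm s J \<theta> c G \<longleftrightarrow>
    (\<exists>X Y. compatible_pair D W VK Dm s J \<theta> c X Y \<and> G = gram (hcat X Y))"
  unfolding compatible_def compatible_pair_def by auto

lemma unique_compatible_iff_factor_grams_unique:
  assumes DW: "D \<le> W" and DV: "D \<le> VK" and det: "det (topleft D Dm) \<noteq> 0"
    and ex: "\<exists>X Y. compatible_pair D W VK Dm s J \<theta> c X Y"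
  shows "(\<exists>!G. G \<in> carrier_mat (W + VK) (W + VK) \<and> mrank G = D \<and> compatible D W VK Dm s J \<theta> c G)
    \<longleftrightarrow> factor_grams_unique D W VK Dm s J \<theta> c"
proof -
  let ?pair = "compatible_pair D W VK Dm s J \<theta> c"
  have "gram (hcat X Y) \<in> carrier_mat (W + VK) (W + VK) \<and> mrank (gram (hcat X Y)) = D"
    if "?pair X Y" for X Y
  proof -
    have X: "X \<in> carrier_mat D W" and Y: "Y \<in> carrier_mat D VK" and XY: "transpose_mat X * Y = Dm"
      using that unfolding compatible_pair_def by auto
    show ?thesis using hcat_carrier[OF X Y] rank_gram_hcat[OF X Y XY DW DV det] by simp
  qed
  then have compatible: "G \<in> carrier_mat (W + VK) (W + VK) \<and> mrank G = D \<and> compatible D W VK Dm s J \<theta> c G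
      \<longleftrightarrow> (\<exists>X Y. ?pair X Y \<and> G = gram (hcat X Y))" for G
    unfolding compatible_iff_pair by blast
  have grams: "gram (hcat X Y) = gram (hcat X' Y') \<longleftrightarrow> gram X = gram X' \<and> gram Y = gram Y'"
    if "?pair X Y" "?pair X' Y'" for X Y X' Y'
    using gram_hcat_eq_iff that unfolding compatible_pair_def by auto
  obtain X\<^sub>0 Y\<^sub>0 where P\<^sub>0: "?pair X\<^sub>0 Y\<^sub>0" using ex by blast
  show ?thesis unfolding compatible factor_grams_unique_def
  proof
    assume "\<exists>!G. \<exists>X Y. ?pair X Y \<and> G = gram (hcat X Y)"
    then show "\<forall>X Y X' Y'. ?pair X Y \<longrightarrow> ?pair X' Y' \<longrightarrow> gram X = gram X' \<and> gram Y = gram Y'"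
      using grams by blast
  next
    assume "\<forall>X Y X' Y'. ?pair X Y \<longrightarrow> ?pair X' Y' \<longrightarrow> gram X = gram X' \<and> gram Y = gram Y'"
    then show "\<exists>!G. \<exists>X Y. ?pair X Y \<and> G = gram (hcat X Y)"
      using grams P\<^sub>0 by (intro ex1I[of _ "gram (hcat X\<^sub>0 Y\<^sub>0)"]) blast+
  qed
qed

lemma compatible_pair_Mx_iff:
  "compatible_pair D W VK Dm Mx J \<theta> c X Y \<longleftrightarrow> compatible_pair D VK W (transpose_mat Dm) St J \<theta> c Y X"
proof -
  have "transpose_mat X * Y = Dm \<longleftrightarrow> transpose_mat Y * X = transpose_mat Dm"
    if "X \<in> carrier_mat D W" "Y \<in> carrier_mat D VK" for X Y :: "real mat"
    using transpose_mult[of "transpose_mat X" W D Y VK] that by (metis transpose_carrier_mat transpose_transpose)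
  then show ?thesis unfolding compatible_pair_def by auto
qed

lemma factor_grams_unique_Mx_iff:
  "factor_grams_unique D W VK Dm Mx J \<theta> c \<longleftrightarrow> factor_grams_unique D VK W (transpose_mat Dm) St J \<theta> c"
  unfolding factor_grams_unique_def compatible_pair_Mx_iff by blast

lemma Mmat_Mx_eq_St_transpose:
  assumes "Dm \<in> carrier_mat W VK" "D \<le> W" and "\<forall>j<J. fst (\<theta> j) < VK \<and> snd (\<theta> j) < VK"
  shows "Mmat D Dm Mx J \<theta> = Mmat D (transpose_mat Dm) St J \<theta>"
proof -
  have "Nmat D Dm Mx (\<theta> j) = Nmat D (transpose_mat Dm) St (\<theta> j)" if "j < J" for j
    using assms that unfolding Nmat_def by (cases "\<theta> j") (auto intro!: eq_matI)
  then show ?thesis unfolding Mmat_def by (metis (no_types, lifting) atLeastLessThan_iff map_eq_conv set_upt)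
qed

lemma topleft_transpose:
  assumes "Dm \<in> carrier_mat W VK" "D \<le> W" "D \<le> VK"
  shows "topleft D (transpose_mat Dm) = transpose_mat (topleft D Dm)"
  unfolding topleft_def using assms by (intro eq_matI) auto

lemma factor_grams_unique_iff_rank_Mmat:
  assumes Dm: "Dm \<in> carrier_mat W VK" and DW: "D \<le> W" and DV: "D \<le> VK"
    and det: "det (topleft D Dm) \<noteq> 0"
    and \<theta>: "\<forall>j<J. fst (\<theta> j) < (if s = St then W else VK) \<and> snd (\<theta> j) < (if s = St then W else VK)"
    and ex: "\<exists>X Y. compatible_pair D W VK Dm s J \<theta> c X Y"
  shows "factor_grams_unique D W VK Dm s J \<theta> c \<longleftrightarrow> mrank (Mmat D Dm s J \<theta>) = D * (D + 1) div 2"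
proof (cases s)
  case St
  interpret st_knowledge D W VK Dm J \<theta> c using Dm DW DV det \<theta> St by unfold_locales auto
  show ?thesis using factor_grams_unique_iff_rank ex St by blast
next
  case Mx
  have M: "Mmat D Dm Mx J \<theta> = Mmat D (transpose_mat Dm) St J \<theta>"
    using Mmat_Mx_eq_St_transpose[OF Dm DW] \<theta> Mx by simp
  have "det (topleft D (transpose_mat Dm)) \<noteq> 0"
    using topleft_transpose[OF Dm DW DV] det_transpose[of "topleft D Dm" D] det
    by (simp add: topleft_def)
  then interpret st_knowledge D VK W "transpose_mat Dm" J \<theta> c using Dm DW DV \<theta> Mx by unfold_locales auto
  show ?thesis
    using factor_grams_unique_iff_rank ex
    unfolding Mx M factor_grams_unique_Mx_iff compatible_pair_Mx_iff by blast
qed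

theorem theorem2:
  fixes D W V K J :: nat and Dm :: "real mat" and s :: sharp
    and \<theta> :: "nat \<Rightarrow> nat \<times> nat" and c :: "nat \<Rightarrow> real"
  assumes "0 < D" "0 < W" "0 < V" "0 < K"
    and "Dm \<in> carrier_mat W (V * K)"
    and "mrank Dm = D"
    and "mrank (topleft D Dm) = D"
    and "\<forall>j<J. fst (\<theta> j) < (if s = St then W else V * K) \<and> snd (\<theta> j) < (if s = St then W else V * K)"
    and "\<exists>G. compatible D W (V * K) Dm s J \<theta> c G"
  shows "(\<exists>!G. G \<in> carrier_mat (W + V * K) (W + V * K) \<and> mrank G = D \<and> compatible D W (V * K) Dm s J \<theta> c G)
         \<longleftrightarrow> mrank (Mmat D Dm s J \<theta>) = D * (D + 1) div 2"
proof -
  note Dm = assms(5)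
  have DW: "D \<le> W" using vec_space.rank_le_nr[OF Dm] assms(6) Dm unfolding mrank_def by simp
  have DV: "D \<le> V * K" using vec_space.rank_le_nc[OF Dm] assms(6) Dm unfolding mrank_def by simp
  have "det (topleft D Dm) \<noteq> 0"
    using vec_space.det_rank_iff[of "topleft D Dm" D] assms(7) unfolding mrank_def topleft_def by simp
  moreover have "\<exists>X Y. compatible_pair D W (V * K) Dm s J \<theta> c X Y"
    using assms(9) unfolding compatible_iff_pair by blast
  ultimately show ?thesis
    using unique_compatible_iff_factor_grams_unique[OF DW DV]
      factor_grams_unique_iff_rank_Mmat[OF Dm DW DV _ assms(8)] by simp
qed

end
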